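(* Suppose Assumption 1 holds. For $\ell\in\{1,\dots,\mathsf{L}\}$ let $Y_\ell\in L_2(\mathsf{X}^2,\nu_\ell)$, set $g_\ell(\bm\theta)=Y_\ell(\bm\theta)-\int_{\mathsf{X}^2}Y_\ell\,\mathrm{d}\nu_\ell$, and let the Markov chain $(\bm\theta^n_\ell)_{n\ge0}$ with kernel $\bm p_\ell$ be started from a probability measure $\nu^0$ on $\mathsf{X}^2$ with $\nu^0\ll\nu_\ell$ and $\frac{\mathrm{d}\nu^0}{\mathrm{d}\nu_\ell}\in L_\infty(\mathsf{X}^2,\nu_\ell)$. For $N_\ell\in\mathbb{N}$, $n_{b,\ell}\in\mathbb{N}$ let $\hat Y_{\ell,N_\ell,n_{b,\ell}}=\frac1{N_\ell}\sum_{n=1}^{N_\ell}Y_\ell(\bm\theta_\ell^{n+n_{b,\ell}})$. Then $$\mathrm{MSE}(\hat Y_{\ell,N_\ell,n_{b,\ell}};\nu^0):=\mathsf{E}_{\nu^0,\bm P_\ell}\Big|\frac1{N_\ell}\sum_{n=1}^{N_\ell}g_\ell(\bm\theta_\ell^{n+n_{b,\ell}})\Big|^2\le C_{\mathrm{mse},\ell}\frac{\mathbb{V}_{\nu_\ell}[Y_\ell]}{N_\ell},$$ where $C_{\mathrm{mse},\ell}=C_{\mathrm{inv},\ell}+C_{\mathrm{ns},\ell}$ with $C_{\mathrm{inv},\ell}=1+\frac{4}{\gamma_{\mathrm{ps}}[\bm P_\ell]}$ and $C_{\mathrm{ns},\ell}=2\big\|\frac{\mathrm{d}\nu^0}{\mathrm{d}\nu_\ell}-1\big\|_{L_\infty}\big(1+\frac4{\gamma_{\mathrm{ps}}[\bm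 P_\ell]}\big)$.
   Context: Setting: $\mathsf{X}$ separable Banach space, prior $\mu_{\mathrm{pr}}$; posteriors $\mu^y_j$ with $\mu_{\mathrm{pr}}$-densities $\pi^y_j$; proposal density $Q_\ell$ w.r.t. $\mu_{\mathrm{pr}}$; $\alpha_j(\theta,z)=\min\{1,\frac{\pi^y_j(z)Q_\ell(\theta)}{\pi^y_j(\theta)Q_\ell(z)}\}$. Joint kernel for $\bm\theta_\ell=(\theta_{\ell,\ell-1},\theta_{\ell,\ell})$: $\bm p_\ell(\bm\theta_\ell,A)=\int\min\{\alpha_{\ell-1}(\theta_{\ell,\ell-1},z),\alpha_\ell(\theta_{\ell,\ell},z)\}\mathbf 1_{\{(z,z)\in A\}}Q_\ell(z)\mu_{\mathrm{pr}}(\mathrm{d}z)+\int(\alpha_{\ell-1}(\theta_{\ell,\ell-1},z)-\alpha_\ell(\theta_{\ell,\ell},z))^+\mathbf 1_{\{(z,\theta_{\ell,\ell})\in A\}}Q_\ell(z)\mu_{\mathrm{pr}}(\mathrm{d}z)+\int(\alpha_\ell(\theta_{\ell,\ell},z)-\alpha_{\ell-1}(\theta_{\ell,\ell-1},z))^+\mathbf 1_{\{(\theta_{\ell,\ell-1},z)\in A\}}Q_\ell(z)\mu_{\mathrm{pr}}(\mathrm{d}z)+\mathbf 1_{\{\bm\theta_\ell\in A\}}(1-\int\max\{\alpha_{\ell-1}(\theta_{\ell,\ell-1},z),\alpha_\ell(\theta_{\ell,\ell},z)\}Q_\ell(z)\mu_{\mathrm{pr}}(\mathrm{d}z))$, with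 operator $\bm P_\ell$ and unique invariant probability measure $\nu_\ell$ (under Assumption 1). $\mathsf{E}_{\nu^0,\bm P_\ell}$ is expectation over the chain with $\bm\theta^0_\ell\sim\nu^0$, $\bm\theta^n_\ell\sim\bm p_\ell(\bm\theta^{n-1}_\ell,\cdot)$; $\mathbb{V}_{\nu_\ell}$ is variance under $\nu_\ell$. Spectral quantities: $L_2^0=L_2^0(\mathsf{X}^2,\nu_\ell)$ is the subspace of $f\in L_2(\mathsf{X}^2,\nu_\ell)$ with $\int f\mathrm{d}\nu_\ell=0$; for a Markov operator $P$ on $L_2$, $\gamma_2[P]=1-\|P\|_{L_2^0\to L_2^0}$; $\bm P_\ell^*$ is the $L_2(\nu_\ell)$-adjoint of $\bm P_\ell$; the pseudo-spectral gap is $\gamma_{\mathrm{ps}}[\bm P_\ell]=\max_{k\ge1,k\in\mathbb{N}}\gamma_2[(\bm P_\ell^* )^k\bm P_\ell^k]/k$. Assumption 1: (1.1) $Q_\ell$ continuous and positive; (1.2) each $\pi^y_j$ continuous and positive; (1.3) for $j=\ell-1,\ell$, all $c_r>0$, $\{\theta: Q_\ell(\theta)/\pi^y_j(\theta)\le c_r\}$ compact; (1.4) $\exists c\in(0,1)$ independent of $\ell$ with $\operatorname{ess\,inf}_z Q_\ell(z)/\pi^y_j(z)\ge c$; (1.5) $\exists r>1,C_r$ independent of $\ell$ with $\int Q_\ell^r\mathrm{d}\mu_{\mathrm{pr}}\le C_r$. *)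

theory Defs
  imports "HOL-Probability.Probability"
begin

definition mh_alpha :: "('a \<Rightarrow> real) \<Rightarrow> ('a \<Rightarrow> real) \<Rightarrow> 'a \<Rightarrow> 'a \<Rightarrow> real" where
  "mh_alpha pij Q \<theta> z = min 1 ((pij z * Q \<theta>) / (pij \<theta> * Q z))"

text \<open>The coupled joint kernel p_l on X^2; pi0 = pi_(l-1), pi1 = pi_l, Q = Q_l,
  mu = prior.  Written literally as the set function A |-> p_l(theta,A) on the Borel sets.\<close>
definition coupled_kernel ::
  "'a::topological_space measure \<Rightarrow> ('a \<Rightarrow> real) \<Rightarrow> ('a \<Rightarrow> real) \<Rightarrow> ('a \<Rightarrow> real)
    \<Rightarrow> 'a \<times> 'a \<Rightarrow> ('a \<times> 'a) measure" where
  "coupled_kernel mu Q pi0 pi1 = (\<lambda>(\<theta>0, \<theta>1).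
     measure_of UNIV (sets (borel :: ('a \<times> 'a) measure)) (\<lambda>A. ennreal (
        (\<integral>z. min (mh_alpha pi0 Q \<theta>0 z) (mh_alpha pi1 Q \<theta>1 z) * indicator A (z, z) * Q z \<partial>mu)
      + (\<integral>z. max 0 (mh_alpha pi0 Q \<theta>0 z - mh_alpha pi1 Q \<theta>1 z) * indicator A (z, \<theta>1) * Q z \<partial>mu)
      + (\<integral>z. max 0 (mh_alpha pi1 Q \<theta>1 z - mh_alpha pi0 Q \<theta>0 z) * indicator A (\<theta>0, z) * Q z \<partial>mu)
      + indicator A (\<theta>0, \<theta>1) *
          (1 - (\<integral>z. max (mh_alpha pi0 Q \<theta>0 z) (mh_alpha pi1 Q \<theta>1 z) * Q z \<partial>mu)))))"

definition markov_op :: "('b \<Rightarrow> 'b measure) \<Rightarrow> ('b \<Rightarrow> real) \<Rightarrow> 'b \<Rightarrow> real" where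
  "markov_op K f x = (\<integral>y. f y \<partial>(K x))"

definition invariant_prob :: "'b measure \<Rightarrow> ('b \<Rightarrow> 'b measure) \<Rightarrow> 'b measure \<Rightarrow> bool" where
  "invariant_prob S K \<nu> \<longleftrightarrow> prob_space \<nu> \<and> sets \<nu> = sets S \<and>
     (\<forall>A \<in> sets S. emeasure \<nu> A = (\<integral>\<^sup>+x. emeasure (K x) A \<partial>\<nu>))"

definition L2_0 :: "'b measure \<Rightarrow> ('b \<Rightarrow> real) set" where
  "L2_0 \<nu> = {f. f \<in> borel_measurable \<nu> \<and> integrable \<nu> (\<lambda>x. (f x)\<^sup>2) \<and> (\<integral>x. f x \<partial>\<nu>) = 0}"

definition L2_norm :: "'b measure \<Rightarrow> ('b \<Rightarrow> real) \<Rightarrow> real" where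
  "L2_norm \<nu> f = sqrt (\<integral>x. (f x)\<^sup>2 \<partial>\<nu>)"

definition L2_inner :: "'b measure \<Rightarrow> ('b \<Rightarrow> real) \<Rightarrow> ('b \<Rightarrow> real) \<Rightarrow> real" where
  "L2_inner \<nu> f g = (\<integral>x. f x * g x \<partial>\<nu>)"

text \<open>Norm on L_2^0 of the operator (P^*)^k P^k, computed through its bilinear form:
  <(P^*)^k P^k f, g> = <P^k f, P^k g> (defining property of the adjoint), and
  ||A|| = sup over unit f, g in L_2^0 of |<A f, g>| (A maps L_2^0 into itself).\<close>
definition adjpow_norm :: "'b measure \<Rightarrow> ('b \<Rightarrow> 'b measure) \<Rightarrow> nat \<Rightarrow> real" where
  "adjpow_norm \<nu> K k = (SUP fg \<in> {(f, g). f \<in> L2_0 \<nu> \<and> g \<in> L2_0 \<nu> \<and> L2_norm \<nu> f \<le> 1 \<and> L2_norm \<nu> g \<le> 1}.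
      \<bar>L2_inner \<nu> ((markov_op K ^^ k) (fst fg)) ((markov_op K ^^ k) (snd fg))\<bar>)"

definition gamma2_adjpow :: "'b measure \<Rightarrow> ('b \<Rightarrow> 'b measure) \<Rightarrow> nat \<Rightarrow> real" where
  "gamma2_adjpow \<nu> K k = 1 - adjpow_norm \<nu> K k"

definition pseudo_gap :: "'b measure \<Rightarrow> ('b \<Rightarrow> 'b measure) \<Rightarrow> real" where
  "pseudo_gap \<nu> K = (SUP k \<in> {1..}. gamma2_adjpow \<nu> K k / real k)"

primrec chain_path :: "'b measure \<Rightarrow> 'b measure \<Rightarrow> ('b \<Rightarrow> 'b measure) \<Rightarrow> nat \<Rightarrow> (nat \<Rightarrow> 'b) measure" where
  "chain_path S M0 K 0 = distr M0 (PiM {..0} (\<lambda>_. S)) (\<lambda>x. \<lambda>i\<in>{..0}. x)"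
| "chain_path S M0 K (Suc n) = bind (chain_path S M0 K n)
     (\<lambda>\<omega>. distr (K (\<omega> n)) (PiM {..Suc n} (\<lambda>_. S)) (\<lambda>y. fun_upd \<omega> (Suc n) y))"

end

theory Submission
  imports Defs
begin

text \<open>
  Under the invariant law \<nu> the Markov operator P is a contraction of L2(\<nu>) that preserves the
  mean, and along a stationary path the covariance of g(\<theta>_i) and g(\<theta>_j) is \<langle>g, P^|i-j| g\<rangle>.
  As the norm of (P*)^k P^k on mean-zero functions is 1 - \<gamma>_k, we get
  \<parallel>P^m g\<parallel>^2 \<le> (1 - \<gamma>_k)^(m div k) \<parallel>g\<parallel>^2, and summing the autocovariances bounds the stationary
  mean squared error by 4 V k / (\<gamma>_k N) for every k, i.e. by 4 V / (\<gamma>_ps N).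
  An initial law \<nu>0 whose density with respect to \<nu> is at most 1 + e inflates every path
  expectation by at most the factor 1 + e, and (1 + e) 4 / \<gamma>_ps \<le> C_inv + C_ns.
\<close>

lemma abs_mult_le_sum_squares: "\<bar>a * b\<bar> \<le> a\<^sup>2 + (b::real)\<^sup>2"
proof -
  have "0 \<le> (\<bar>a\<bar> - \<bar>b\<bar>)\<^sup>2 + \<bar>a\<bar> * \<bar>b\<bar>" by simp
  then show ?thesis by (simp add: power2_diff abs_mult)
qed

lemma Cauchy_Schwarz_integral:
  fixes f g :: "'b \<Rightarrow> real"
  assumes [measurable]: "f \<in> borel_measurable M" "g \<in> borel_measurable M"
    and f2: "integrable M (\<lambda>x. (f x)\<^sup>2)" and g2: "integrable M (\<lambda>x. (g x)\<^sup>2)"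
  shows "integrable M (\<lambda>x. f x * g x)"
    and "\<bar>\<integral>x. f x * g x \<partial>M\<bar> \<le> sqrt (\<integral>x. (f x)\<^sup>2 \<partial>M) * sqrt (\<integral>x. (g x)\<^sup>2 \<partial>M)"
proof -
  show fg: "integrable M (\<lambda>x. f x * g x)"
    by (rule Bochner_Integration.integrable_bound[where f="\<lambda>x. (f x)\<^sup>2 + (g x)\<^sup>2"])
      (use f2 g2 abs_mult_le_sum_squares in auto)
  have sq: "ennreal (\<integral>x. (h x)\<^sup>2 \<partial>M) = (\<integral>\<^sup>+x. ennreal \<bar>h x\<bar> ^ 2 \<partial>M)"
    if "integrable M (\<lambda>x. (h x)\<^sup>2)" for h :: "'b \<Rightarrow> real"
  proof -
    have "(\<integral>\<^sup>+x. ennreal \<bar>h x\<bar> ^ 2 \<partial>M) = (\<integral>\<^sup>+x. ennreal ((h x)\<^sup>2) \<partial>M)"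
      by (simp add: ennreal_power)
    also have "\<dots> = ennreal (\<integral>x. (h x)\<^sup>2 \<partial>M)"
      by (rule nn_integral_eq_integral[OF that]) simp
    finally show ?thesis ..
  qed
  have "ennreal \<bar>\<integral>x. f x * g x \<partial>M\<bar> \<le> (\<integral>\<^sup>+x. ennreal \<bar>f x\<bar> * ennreal \<bar>g x\<bar> \<partial>M)"
    using integral_norm_bound_ennreal[OF fg] by (simp add: ennreal_mult abs_mult)
  then have "ennreal \<bar>\<integral>x. f x * g x \<partial>M\<bar> ^ 2 \<le> (\<integral>\<^sup>+x. ennreal \<bar>f x\<bar> * ennreal \<bar>g x\<bar> \<partial>M) ^ 2"
    by (rule power_mono) simp
  also have "\<dots> \<le> ennreal (\<integral>x. (f x)\<^sup>2 \<partial>M) * ennreal (\<integral>x. (g x)\<^sup>2 \<partial>M)"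
    unfolding sq[OF f2] sq[OF g2] by (rule Cauchy_Schwarz_nn_integral) auto
  finally have "(\<integral>x. f x * g x \<partial>M)\<^sup>2 \<le> (\<integral>x. (f x)\<^sup>2 \<partial>M) * (\<integral>x. (g x)\<^sup>2 \<partial>M)"
    by (simp add: ennreal_power ennreal_mult[symmetric])
  then show "\<bar>\<integral>x. f x * g x \<partial>M\<bar> \<le> sqrt (\<integral>x. (f x)\<^sup>2 \<partial>M) * sqrt (\<integral>x. (g x)\<^sup>2 \<partial>M)"
    by (metis real_sqrt_abs real_sqrt_le_mono real_sqrt_mult)
qed

lemma
  fixes F :: "_ \<Rightarrow> real"
  assumes \<kappa>[measurable]: "\<kappa> \<in> M \<rightarrow>\<^sub>M subprob_algebra B" and F[measurable]: "F \<in> borel_measurable B"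
    and int: "integrable (M \<bind> \<kappa>) F"
  shows AE_integrable_kernel_of_integrable_bind: "AE x in M. integrable (\<kappa> x) F"
    and integrable_kernel_integral_of_integrable_bind: "integrable M (\<lambda>x. \<integral>y. F y \<partial>\<kappa> x)"
proof -
  have "(\<integral>\<^sup>+x. \<integral>\<^sup>+y. norm (F y) \<partial>\<kappa> x \<partial>M) = (\<integral>\<^sup>+y. norm (F y) \<partial>(M \<bind> \<kappa>))"
    by (rule nn_integral_bind[symmetric, OF _ \<kappa>]) simp
  also have "\<dots> < \<infinity>"
    using int by (simp add: integrable_iff_bounded)
  finally have fin: "(\<integral>\<^sup>+x. \<integral>\<^sup>+y. norm (F y) \<partial>\<kappa> x \<partial>M) < \<infinity>" .
  have "AE x in M. (\<integral>\<^sup>+y. norm (F y) \<partial>\<kappa> x) \<noteq> \<infinity>"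
    by (rule nn_integral_PInf_AE) (use fin in auto)
  with AE_space show "AE x in M. integrable (\<kappa> x) F"
    by eventually_elim (auto simp: integrable_iff_bounded less_top
        measurable_cong_sets[OF subprob_measurableD(2)[OF \<kappa>] refl])
  have bound: "ennreal (norm (\<integral>y. F y \<partial>\<kappa> x)) \<le> (\<integral>\<^sup>+y. norm (F y) \<partial>\<kappa> x)" for x
    using integral_norm_bound_ennreal[of "\<kappa> x" F] not_integrable_integral_eq[of "\<kappa> x" F]
    by (cases "integrable (\<kappa> x) F") auto
  have "(\<integral>\<^sup>+x. norm (\<integral>y. F y \<partial>\<kappa> x) \<partial>M) < \<infinity>"
    by (rule le_less_trans[OF nn_integral_mono[OF bound] fin])
  then show "integrable M (\<lambda>x. \<integral>y. F y \<partial>\<kappa> x)"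
    by (intro integrableI_bounded) auto
qed

lemma integral_bind_of_nonneg:
  fixes G :: "_ \<Rightarrow> real"
  assumes \<kappa>[measurable]: "\<kappa> \<in> M \<rightarrow>\<^sub>M subprob_algebra B" and G[measurable]: "G \<in> borel_measurable B"
    and int: "integrable (M \<bind> \<kappa>) G" and nonneg: "\<And>y. 0 \<le> G y"
  shows "(\<integral>y. G y \<partial>(M \<bind> \<kappa>)) = (\<integral>x. (\<integral>y. G y \<partial>\<kappa> x) \<partial>M)"
proof -
  have "(\<integral>\<^sup>+y. G y \<partial>(M \<bind> \<kappa>)) = (\<integral>\<^sup>+x. \<integral>\<^sup>+y. G y \<partial>\<kappa> x \<partial>M)"
    by (rule nn_integral_bind[OF _ \<kappa>]) simp
  also have "\<dots> = (\<integral>\<^sup>+x. ennreal (\<integral>y. G y \<partial>\<kappa> x) \<partial>M)"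
  proof (rule nn_integral_cong_AE)
    show "AE x in M. (\<integral>\<^sup>+y. G y \<partial>\<kappa> x) = ennreal (\<integral>y. G y \<partial>\<kappa> x)"
      using AE_integrable_kernel_of_integrable_bind[OF \<kappa> G int]
      by eventually_elim (simp add: nn_integral_eq_integral nonneg)
  qed
  finally have "(\<integral>\<^sup>+y. G y \<partial>(M \<bind> \<kappa>)) = (\<integral>\<^sup>+x. ennreal (\<integral>y. G y \<partial>\<kappa> x) \<partial>M)" .
  moreover have "(\<integral>\<^sup>+y. G y \<partial>(M \<bind> \<kappa>)) = ennreal (\<integral>y. G y \<partial>(M \<bind> \<kappa>))"
    by (rule nn_integral_eq_integral[OF int]) (simp add: nonneg)
  moreover have "(\<integral>\<^sup>+x. ennreal (\<integral>y. G y \<partial>\<kappa> x) \<partial>M) = ennreal (\<integral>x. (\<integral>y. G y \<partial>\<kappa> x) \<partial>M)"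
    by (rule nn_integral_eq_integral[OF integrable_kernel_integral_of_integrable_bind[OF \<kappa> G int]])
      (simp add: nonneg)
  ultimately show ?thesis
    by (simp add: nonneg integral_nonneg)
qed

lemma integral_bind_of_integrable:
  fixes F :: "_ \<Rightarrow> real"
  assumes \<kappa>[measurable]: "\<kappa> \<in> M \<rightarrow>\<^sub>M subprob_algebra B" and F[measurable]: "F \<in> borel_measurable B"
    and int: "integrable (M \<bind> \<kappa>) F"
  shows "(\<integral>y. F y \<partial>(M \<bind> \<kappa>)) = (\<integral>x. (\<integral>y. F y \<partial>\<kappa> x) \<partial>M)"
proof -
  define Fp Fn where "Fp y = max 0 (F y)" and "Fn y = max 0 (- F y)" for y
  have [measurable]: "Fp \<in> borel_measurable B" "Fn \<in> borel_measurable B"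
    unfolding Fp_def Fn_def by measurable
  have split: "F y = Fp y - Fn y" for y
    by (simp add: Fp_def Fn_def)
  have nonneg: "0 \<le> Fp y" "0 \<le> Fn y" for y
    by (simp_all add: Fp_def Fn_def)
  have int_parts: "integrable (M \<bind> \<kappa>) Fp" "integrable (M \<bind> \<kappa>) Fn"
    using int unfolding Fp_def Fn_def by auto
  note AE_parts = AE_integrable_kernel_of_integrable_bind[OF \<kappa> _ int_parts(1)]
    AE_integrable_kernel_of_integrable_bind[OF \<kappa> _ int_parts(2)]
  have "(\<integral>y. F y \<partial>(M \<bind> \<kappa>)) = (\<integral>y. Fp y \<partial>(M \<bind> \<kappa>)) - (\<integral>y. Fn y \<partial>(M \<bind> \<kappa>))"
    using int_parts by (simp add: split)
  also have "\<dots> = (\<integral>x. (\<integral>y. Fp y \<partial>\<kappa> x) \<partial>M) - (\<integral>x. (\<integral>y. Fn y \<partial>\<kappa> x) \<partial>M)"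
    by (simp add: integral_bind_of_nonneg[OF \<kappa> _ int_parts(1) nonneg(1)]
        integral_bind_of_nonneg[OF \<kappa> _ int_parts(2) nonneg(2)])
  also have "\<dots> = (\<integral>x. (\<integral>y. Fp y \<partial>\<kappa> x) - (\<integral>y. Fn y \<partial>\<kappa> x) \<partial>M)"
    using int_parts by (simp add: integrable_kernel_integral_of_integrable_bind[OF \<kappa>])
  also have "\<dots> = (\<integral>x. (\<integral>y. F y \<partial>\<kappa> x) \<partial>M)"
    using AE_parts by (intro integral_cong_AE) (auto, eventually_elim, simp add: split)
  finally show ?thesis .
qed

definition sq_integrable :: "'b measure \<Rightarrow> ('b \<Rightarrow> real) \<Rightarrow> bool" where
  "sq_integrable M f \<longleftrightarrow> f \<in> borel_measurable M \<and> integrable M (\<lambda>x. (f x)\<^sup>2)"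

lemma L2_0_iff: "f \<in> L2_0 M \<longleftrightarrow> sq_integrable M f \<and> (\<integral>x. f x \<partial>M) = 0"
  by (auto simp: L2_0_def sq_integrable_def)

lemma (in prob_space) integral_square_le_integral_of_square:
  fixes f :: "'a \<Rightarrow> real"
  shows "integrable M f \<Longrightarrow> integrable M (\<lambda>x. (f x)\<^sup>2) \<Longrightarrow> (\<integral>x. f x \<partial>M)\<^sup>2 \<le> (\<integral>x. (f x)\<^sup>2 \<partial>M)"
  using variance_positive[of f] variance_eq[of f] by simp

lemma (in prob_space) centered_in_L2_0:
  assumes "f \<in> borel_measurable M" "integrable M (\<lambda>x. (f x)\<^sup>2)"
  shows "(\<lambda>x. f x - (\<integral>y. f y \<partial>M)) \<in> L2_0 M"
proof -
  have "integrable M f"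
    using assms by (rule square_integrable_imp_integrable)
  then show ?thesis
    using assms by (simp add: L2_0_def power2_diff prob_space)
qed

lemma (in prob_space) esssup_nonneg: "(\<And>x. 0 \<le> f x) \<Longrightarrow> 0 \<le> esssup M (f :: _ \<Rightarrow> ereal)"
  using esssup_mono[of "\<lambda>_. 0" M f] esssup_const[of M "0 :: ereal"] by (simp add: emeasure_space_1)

lemma (in prob_space) RN_deriv_le_of_bounded:
  assumes N: "sigma_finite_measure N" "sets N = sets M" "absolutely_continuous M N"
    and bounded: "esssup M (\<lambda>x. ereal \<bar>enn2real (RN_deriv M N x)\<bar>) < \<infinity>"
  obtains e where "0 \<le> e" "esssup M (\<lambda>x. ereal \<bar>enn2real (RN_deriv M N x) - 1\<bar>) = ereal e"
    and "AE x in M. RN_deriv M N x \<le> ennreal (1 + e)"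
proof -
  define h where "h x = enn2real (RN_deriv M N x)" for x
  have [measurable]: "h \<in> borel_measurable M"
    unfolding h_def by measurable
  have "esssup M (\<lambda>x. ereal \<bar>h x\<bar>) < \<infinity>"
    using bounded unfolding h_def .
  then obtain b where "esssup M (\<lambda>x. ereal \<bar>h x\<bar>) = ereal b"
    using esssup_nonneg[of "\<lambda>x. ereal \<bar>h x\<bar>"] by (cases "esssup M (\<lambda>x. ereal \<bar>h x\<bar>)") auto
  then have "AE x in M. \<bar>h x\<bar> \<le> b"
    using esssup_AE[of "\<lambda>x. ereal \<bar>h x\<bar>" M] by simp
  then have "AE x in M. ereal \<bar>h x - 1\<bar> \<le> ereal (b + 1)"
    by eventually_elim simp
  then have "esssup M (\<lambda>x. ereal \<bar>h x - 1\<bar>) \<le> ereal (b + 1)"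
    by (intro esssup_I) simp_all
  then obtain e where e: "esssup M (\<lambda>x. ereal \<bar>h x - 1\<bar>) = ereal e"
    using esssup_nonneg[of "\<lambda>x. ereal \<bar>h x - 1\<bar>"] by (cases "esssup M (\<lambda>x. ereal \<bar>h x - 1\<bar>)") auto
  have "0 \<le> e"
    using esssup_nonneg[of "\<lambda>x. ereal \<bar>h x - 1\<bar>"] e by simp
  have "AE x in M. \<bar>h x - 1\<bar> \<le> e"
    using esssup_AE[of "\<lambda>x. ereal \<bar>h x - 1\<bar>" M] by (simp add: e)
  moreover have "AE x in M. RN_deriv M N x \<noteq> \<infinity>"
    using N by (intro RN_deriv_finite) auto
  ultimately have RN_le: "AE x in M. RN_deriv M N x \<le> ennreal (1 + e)"
  proof eventually_elim
    case (elim x)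
    then have "RN_deriv M N x = ennreal (h x)"
      by (simp add: h_def less_top)
    moreover have "h x \<le> 1 + e"
      using elim(1) by simp
    ultimately show ?case
      by (simp add: ennreal_leI)
  qed
  show ?thesis
    using that[OF \<open>0 \<le> e\<close> _ RN_le] e by (simp add: h_def)
qed

lemma (in prob_space) nn_integral_le_of_bounded_RN_deriv:
  assumes N: "sigma_finite_measure N" "sets N = sets M" "absolutely_continuous M N"
    and bounded: "esssup M (\<lambda>x. ereal \<bar>enn2real (RN_deriv M N x)\<bar>) < \<infinity>"
  obtains e where "0 \<le> e" "esssup M (\<lambda>x. ereal \<bar>enn2real (RN_deriv M N x) - 1\<bar>) = ereal e"
    and "\<And>G. G \<in> borel_measurable M \<Longrightarrow> (\<integral>\<^sup>+x. G x \<partial>N) \<le> ennreal (1 + e) * (\<integral>\<^sup>+x. G x \<partial>M)"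
proof -
  obtain e where e: "0 \<le> e" "esssup M (\<lambda>x. ereal \<bar>enn2real (RN_deriv M N x) - 1\<bar>) = ereal e"
    and RN_le: "AE x in M. RN_deriv M N x \<le> ennreal (1 + e)"
    using RN_deriv_le_of_bounded[OF N bounded] by blast
  have density: "density M (RN_deriv M N) = N"
    using N by (intro density_RN_deriv) auto
  show ?thesis
  proof (rule that[OF e])
    fix G :: "_ \<Rightarrow> ennreal" assume [measurable]: "G \<in> borel_measurable M"
    have "(\<integral>\<^sup>+x. G x \<partial>N) = (\<integral>\<^sup>+x. RN_deriv M N x * G x \<partial>M)"
      by (subst (1) density[symmetric]) (simp add: nn_integral_density)
    also have "\<dots> \<le> (\<integral>\<^sup>+x. ennreal (1 + e) * G x \<partial>M)"
    proof (rule nn_integral_mono_AE)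
      show "AE x in M. RN_deriv M N x * G x \<le> ennreal (1 + e) * G x"
        using RN_le by eventually_elim (rule mult_right_mono, simp_all)
    qed
    also have "\<dots> = ennreal (1 + e) * (\<integral>\<^sup>+x. G x \<partial>M)"
      by (simp add: nn_integral_cmult)
    finally show "(\<integral>\<^sup>+x. G x \<partial>N) \<le> ennreal (1 + e) * (\<integral>\<^sup>+x. G x \<partial>M)" .
  qed
qed

lemma sum_lessThan_div_le:
  fixes a :: "nat \<Rightarrow> real"
  assumes nonneg: "\<And>q. 0 \<le> a q" and k: "1 \<le> k"
  shows "(\<Sum>m<M. a (m div k)) \<le> real k * (\<Sum>q<M. a q)"
proof -
  have blocks: "(\<Sum>m<M * k. a (m div k)) = real k * (\<Sum>q<M. a q)" for M
  proof (induction M)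
    case (Suc M)
    have split: "{..<Suc M * k} = {..<M * k} \<union> {M * k..<M * k + k}"
      by auto
    have "(\<Sum>m<Suc M * k. a (m div k)) = (\<Sum>m<M * k. a (m div k)) + (\<Sum>m\<in>{M * k..<M * k + k}. a (m div k))"
      unfolding split by (rule sum.union_disjoint) auto
    also have "(\<Sum>m\<in>{M * k..<M * k + k}. a (m div k)) = (\<Sum>m\<in>{M * k..<M * k + k}. a M)"
    proof (rule sum.cong[OF refl])
      fix m assume "m \<in> {M * k..<M * k + k}"
      then have "m div k = M"
        using k by (intro div_nat_eqI) (auto simp: mult.commute)
      then show "a (m div k) = a M" by simp
    qed
    finally show ?case
      using Suc by (simp add: distrib_left)
  qed simp
  have "(\<Sum>m<M. a (m div k)) \<le> (\<Sum>m<M * k. a (m div k))"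
    using k nonneg by (intro sum_mono2) auto
  then show ?thesis
    by (simp add: blocks)
qed

lemma sum_power_div_le:
  fixes \<rho> :: real
  assumes "0 \<le> \<rho>" "\<rho> < 1" "1 \<le> k"
  shows "(\<Sum>m<M. \<rho> ^ (m div k)) \<le> real k / (1 - \<rho>)"
proof -
  have "(\<Sum>m<M. \<rho> ^ (m div k)) \<le> real k * (\<Sum>q<M. \<rho> ^ q)"
    using assms by (intro sum_lessThan_div_le) auto
  also have "(\<Sum>q<M. \<rho> ^ q) = (1 - \<rho> ^ M) / (1 - \<rho>)"
    using assms by (subst geometric_sum) (auto simp: field_simps)
  also have "\<dots> \<le> 1 / (1 - \<rho>)"
    using assms by (intro divide_right_mono) auto
  finally show ?thesis
    using assms by (simp add: mult_left_mono)
qed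

lemma inverse_one_minus_sqrt_le:
  fixes \<gamma> :: real
  assumes "0 < \<gamma>" "\<gamma> \<le> 1"
  shows "1 / (1 - sqrt (1 - \<gamma>)) \<le> 2 / \<gamma>"
proof -
  have "sqrt (1 - \<gamma>) \<le> sqrt ((1 - \<gamma> / 2)\<^sup>2)"
    by (rule real_sqrt_le_mono) (simp add: power2_eq_square algebra_simps)
  then have "\<gamma> / 2 \<le> 1 - sqrt (1 - \<gamma>)"
    using assms by simp
  then show ?thesis
    using assms by (simp add: field_simps)
qed

lemma sum_distance_le:
  fixes h :: "nat \<Rightarrow> real"
  assumes a: "a \<in> {1..N}" and nonneg: "\<And>m. 0 \<le> h m"
  shows "(\<Sum>b\<in>{1..N}. h (if a \<le> b then b - a else a - b)) \<le> 2 * (\<Sum>m<N. h m)"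
proof -
  have reindex_le: "(\<Sum>b\<in>B. h (\<phi> b)) \<le> (\<Sum>m<N. h m)"
    if "inj_on \<phi> B" "\<phi> ` B \<subseteq> {..<N}" for \<phi> and B :: "nat set"
  proof -
    have "(\<Sum>b\<in>B. h (\<phi> b)) = (\<Sum>m\<in>\<phi> ` B. h m)"
      by (simp add: sum.reindex that(1))
    also have "\<dots> \<le> (\<Sum>m<N. h m)"
      using that(2) nonneg by (intro sum_mono2) auto
    finally show ?thesis .
  qed
  have "(\<Sum>b\<in>{1..N}. h (if a \<le> b then b - a else a - b))
      = (\<Sum>b\<in>{1..N} \<inter> {b. a \<le> b}. h (b - a)) + (\<Sum>b\<in>{1..N} \<inter> - {b. a \<le> b}. h (a - b))"
    by (simp add: if_distrib sum.If_cases)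
  also have "\<dots> \<le> (\<Sum>m<N. h m) + (\<Sum>m<N. h m)"
    using a by (intro add_mono reindex_le) (auto simp: inj_on_def)
  finally show ?thesis
    by simp
qed

lemma ereal_mse_constant_bound:
  fixes mse mse_stat V \<gamma> e :: real and N :: nat
  assumes N: "1 \<le> N" and "0 \<le> e" "0 \<le> \<gamma>" "0 \<le> V"
    and change: "mse \<le> (1 + e) * mse_stat"
    and crude: "mse_stat \<le> 2 * V" and gap: "\<gamma> * (real N * mse_stat) \<le> 4 * V"
  shows "ereal mse \<le> (1 + 4 / ereal \<gamma> + 2 * ereal e * (1 + 4 / ereal \<gamma>)) * ereal V / ereal (real N)"
proof (cases "\<gamma> = 0")
  case True
  \<comment> \<open>in ereal, 4 / 0 = \<infinity> but \<infinity> * 0 = 0: the case V = 0 needs the crude bound\<close>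
  show ?thesis
  proof (cases "V = 0")
    case True
    then have "mse_stat \<le> 0"
      using crude by simp
    then have "mse \<le> 0"
      using change mult_nonneg_nonpos[of "1 + e" mse_stat] \<open>0 \<le> e\<close> by linarith
    then show ?thesis
      using True by simp
  next
    case False
    then show ?thesis
      using \<open>\<gamma> = 0\<close> \<open>0 \<le> e\<close> \<open>0 \<le> V\<close> N by simp
  qed
next
  case False
  then have "0 < \<gamma>"
    using \<open>0 \<le> \<gamma>\<close> by simp
  have "mse_stat \<le> 4 * V / (\<gamma> * real N)"
    using gap \<open>0 < \<gamma>\<close> N by (simp add: pos_le_divide_eq mult.commute mult.left_commute)
  then have "(1 + e) * mse_stat \<le> (1 + e) * (4 * V / (\<gamma> * real N))"
    using \<open>0 \<le> e\<close> by (intro mult_left_mono) simp_all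
  then have "mse \<le> (1 + e) * (4 * V / (\<gamma> * real N))"
    using change by linarith
  also have "\<dots> \<le> (1 + 4 / \<gamma> + 2 * e * (1 + 4 / \<gamma>)) * V / real N"
    using \<open>0 < \<gamma>\<close> \<open>0 \<le> e\<close> \<open>0 \<le> V\<close> N
    by (simp add: field_simps mult_left_mono)
  finally show ?thesis
    using False N by (simp add: add.commute)
qed

section \<open>Markov chains on a Borel space\<close>

locale markov_kernel =
  fixes K :: "'a::topological_space \<Rightarrow> 'a measure"
  assumes measurable_kernel: "K \<in> borel \<rightarrow>\<^sub>M prob_algebra borel"
begin

lemma prob_space_kernel: "prob_space (K x)"
  and sets_kernel: "sets (K x) = sets borel"
  using measurable_space[OF measurable_kernel, of x] by (auto simp: space_prob_algebra)

lemma kernel_subprob: "K \<in> borel \<rightarrow>\<^sub>M subprob_algebra borel"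
  by (rule measurable_prob_algebraD[OF measurable_kernel])

lemma measurable_markov_op: "f \<in> borel_measurable borel \<Longrightarrow> markov_op K f \<in> borel_measurable borel"
  unfolding markov_op_def by (rule measurable_compose[OF kernel_subprob integral_measurable_subprob_algebra])

abbreviation paths :: "nat \<Rightarrow> (nat \<Rightarrow> 'a) measure" where
  "paths n \<equiv> PiM {..n} (\<lambda>_. borel)"

definition extend_path :: "nat \<Rightarrow> (nat \<Rightarrow> 'a) \<Rightarrow> (nat \<Rightarrow> 'a) measure" where
  "extend_path n \<omega> = distr (K (\<omega> n)) (paths (Suc n)) (\<lambda>y. fun_upd \<omega> (Suc n) y)"

lemma chain_path_Suc: "chain_path borel M0 K (Suc n) = chain_path borel M0 K n \<bind> extend_path n"
  by (simp add: extend_path_def[abs_def])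

lemma measurable_fun_upd_path: "\<omega> \<in> space (paths n) \<Longrightarrow> (\<lambda>y. fun_upd \<omega> (Suc n) y) \<in> borel \<rightarrow>\<^sub>M paths (Suc n)"
  by (rule measurable_fun_upd[where J="{..n}"]) auto

lemma measurable_extend_path: "extend_path n \<in> paths n \<rightarrow>\<^sub>M prob_algebra (paths (Suc n))"
proof (rule measurable_prob_algebraI)
  show "prob_space (extend_path n \<omega>)" if "\<omega> \<in> space (paths n)" for \<omega>
    unfolding extend_path_def
    by (rule prob_space.prob_space_distr[OF prob_space_kernel])
      (simp add: measurable_cong_sets[OF sets_kernel refl] measurable_fun_upd_path[OF that])
  have "(\<lambda>\<omega>. K (\<omega> n)) \<in> paths n \<rightarrow>\<^sub>M subprob_algebra borel"
    by (rule measurable_compose[OF measurable_component_singleton[of n "{..n}" "\<lambda>_. borel"] kernel_subprob]) simp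
  moreover have "(\<lambda>(\<omega>, y). fun_upd \<omega> (Suc n) y) \<in> paths n \<Otimes>\<^sub>M borel \<rightarrow>\<^sub>M paths (Suc n)"
    unfolding case_prod_beta' by (rule measurable_fun_upd[where J="{..n}"]) auto
  ultimately show "extend_path n \<in> paths n \<rightarrow>\<^sub>M subprob_algebra (paths (Suc n))"
    unfolding extend_path_def[abs_def] by (rule measurable_distr2[rotated])
qed

context
  fixes M0 :: "'a measure"
  assumes M0: "prob_space M0" "sets M0 = sets borel"
begin

lemma chain_path_in_prob_algebra: "chain_path borel M0 K n \<in> space (prob_algebra (paths n))"
proof (induction n)
  case 0
  have "(\<lambda>x. \<lambda>i\<in>{..0::nat}. x) \<in> M0 \<rightarrow>\<^sub>M paths 0"
    by (simp add: measurable_cong_sets[OF M0(2) refl] measurable_restrict)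
  then show ?case
    by (simp add: space_prob_algebra prob_space.prob_space_distr[OF M0(1)])
next
  case (Suc n)
  then show ?case
    unfolding chain_path_Suc space_prob_algebra
    using prob_space_bind'[OF Suc measurable_extend_path] sets_bind'[OF Suc measurable_extend_path]
    by blast
qed

lemma sets_chain_path: "sets (chain_path borel M0 K n) = sets (paths n)"
  using chain_path_in_prob_algebra[of n] by (auto simp: space_prob_algebra)

lemma space_chain_path: "space (chain_path borel M0 K n) = space (paths n)"
  by (rule sets_eq_imp_space_eq[OF sets_chain_path])

lemma extend_path_subprob: "extend_path n \<in> chain_path borel M0 K n \<rightarrow>\<^sub>M subprob_algebra (paths (Suc n))"
  using measurable_prob_algebraD[OF measurable_extend_path]
  by (simp add: measurable_cong_sets[OF sets_chain_path refl])

lemma nn_integral_chain_path_Suc: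
  assumes F: "F \<in> borel_measurable (paths (Suc n))"
  shows "(\<integral>\<^sup>+\<omega>. F \<omega> \<partial>chain_path borel M0 K (Suc n))
       = (\<integral>\<^sup>+\<omega>. (\<integral>\<^sup>+y. F (fun_upd \<omega> (Suc n) y) \<partial>K (\<omega> n)) \<partial>chain_path borel M0 K n)"
  unfolding chain_path_Suc nn_integral_bind[OF F extend_path_subprob]
proof (rule nn_integral_cong)
  fix \<omega> assume "\<omega> \<in> space (chain_path borel M0 K n)"
  then have "(\<lambda>y. fun_upd \<omega> (Suc n) y) \<in> K (\<omega> n) \<rightarrow>\<^sub>M paths (Suc n)"
    using measurable_fun_upd_path by (simp add: space_chain_path measurable_cong_sets[OF sets_kernel refl])
  then show "(\<integral>\<^sup>+y. F y \<partial>extend_path n \<omega>) = (\<integral>\<^sup>+y. F (fun_upd \<omega> (Suc n) y) \<partial>K (\<omega> n))"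
    unfolding extend_path_def by (rule nn_integral_distr) (simp add: F)
qed

lemma integral_chain_path_Suc:
  fixes F :: "_ \<Rightarrow> real"
  assumes F: "F \<in> borel_measurable (paths (Suc n))"
    and int: "integrable (chain_path borel M0 K (Suc n)) F"
  shows "(\<integral>\<omega>. F \<omega> \<partial>chain_path borel M0 K (Suc n))
       = (\<integral>\<omega>. (\<integral>y. F (fun_upd \<omega> (Suc n) y) \<partial>K (\<omega> n)) \<partial>chain_path borel M0 K n)"
  unfolding chain_path_Suc integral_bind_of_integrable[OF extend_path_subprob F int[unfolded chain_path_Suc]]
proof (rule Bochner_Integration.integral_cong[OF refl])
  fix \<omega> assume "\<omega> \<in> space (chain_path borel M0 K n)"
  then have "(\<lambda>y. fun_upd \<omega> (Suc n) y) \<in> K (\<omega> n) \<rightarrow>\<^sub>M paths (Suc n)"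
    using measurable_fun_upd_path by (simp add: space_chain_path measurable_cong_sets[OF sets_kernel refl])
  then show "(\<integral>y. F y \<partial>extend_path n \<omega>) = (\<integral>y. F (fun_upd \<omega> (Suc n) y) \<partial>K (\<omega> n))"
    unfolding extend_path_def by (rule integral_distr) (simp add: F)
qed

end

lemma nn_integral_chain_path_le:
  assumes M0: "prob_space M0" "sets M0 = sets borel"
    and M1: "prob_space M1" "sets M1 = sets borel"
    and initial_le: "\<And>G. G \<in> borel_measurable borel \<Longrightarrow> (\<integral>\<^sup>+x. G x \<partial>M0) \<le> C * (\<integral>\<^sup>+x. G x \<partial>M1)"
    and F: "F \<in> borel_measurable (paths n)"
  shows "(\<integral>\<^sup>+\<omega>. F \<omega> \<partial>chain_path borel M0 K n) \<le> C * (\<integral>\<^sup>+\<omega>. F \<omega> \<partial>chain_path borel M1 K n)"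
  using F
proof (induction n arbitrary: F)
  case 0
  have emb: "(\<lambda>x. \<lambda>i\<in>{..0::nat}. x) \<in> borel \<rightarrow>\<^sub>M paths 0"
    by (simp add: measurable_restrict)
  have start: "(\<integral>\<^sup>+\<omega>. F \<omega> \<partial>chain_path borel M K 0) = (\<integral>\<^sup>+x. F (\<lambda>i\<in>{..0}. x) \<partial>M)"
    if "sets M = sets borel" for M :: "'a measure"
    unfolding chain_path.simps
    by (rule nn_integral_distr) (use 0 emb in \<open>simp_all add: measurable_cong_sets[OF that refl]\<close>)
  show ?case
    unfolding start[OF M0(2)] start[OF M1(2)] by (rule initial_le[OF measurable_compose[OF emb 0]])
next
  case (Suc n)
  have "(\<lambda>\<omega>. \<integral>\<^sup>+y. F y \<partial>extend_path n \<omega>) \<in> borel_measurable (paths n)"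
    by (rule measurable_compose[OF measurable_prob_algebraD[OF measurable_extend_path]
          nn_integral_measurable_subprob_algebra[OF Suc.prems]])
  then show ?case
    using Suc.IH unfolding chain_path_Suc
    by (simp add: nn_integral_bind[OF Suc.prems extend_path_subprob[OF M0]]
        nn_integral_bind[OF Suc.prems extend_path_subprob[OF M1]])
qed

end

section \<open>Stationary chains and their Markov operator\<close>

locale stationary_markov_kernel = markov_kernel +
  fixes \<nu> :: "'a measure"
  assumes invariant: "invariant_prob borel K \<nu>"
begin

abbreviation P :: "('a \<Rightarrow> real) \<Rightarrow> 'a \<Rightarrow> real" where
  "P \<equiv> markov_op K"

lemma prob_space_stationary: "prob_space \<nu>"
  and sets_stationary: "sets \<nu> = sets borel"
  using invariant by (auto simp: invariant_prob_def)

interpretation stationary: prob_space \<nu>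
  by (rule prob_space_stationary)

lemma measurable_stationary_iff: "f \<in> \<nu> \<rightarrow>\<^sub>M N \<longleftrightarrow> f \<in> borel \<rightarrow>\<^sub>M N"
  by (simp add: measurable_cong_sets[OF sets_stationary refl])

lemma kernel_subprob_stationary: "K \<in> \<nu> \<rightarrow>\<^sub>M subprob_algebra borel"
  using kernel_subprob by (simp add: measurable_stationary_iff)

lemma bind_stationary: "\<nu> \<bind> K = \<nu>"
proof (rule measure_eqI)
  show sets_bind: "sets (\<nu> \<bind> K) = sets \<nu>"
    using sets_bind[OF sets_kernel stationary.not_empty] by (simp add: sets_stationary)
  fix A assume "A \<in> sets (\<nu> \<bind> K)"
  then show "emeasure (\<nu> \<bind> K) A = emeasure \<nu> A"
    using invariant emeasure_bind[OF stationary.not_empty kernel_subprob_stationary]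
    by (simp add: sets_bind sets_stationary invariant_prob_def)
qed

lemma sq_integrable_integrable: "sq_integrable \<nu> f \<Longrightarrow> integrable \<nu> f"
  by (simp add: sq_integrable_def stationary.square_integrable_imp_integrable)

lemma markov_op_stationary:
  assumes f: "sq_integrable \<nu> f"
  shows "sq_integrable \<nu> (P f)"
    and "(\<integral>x. P f x \<partial>\<nu>) = (\<integral>x. f x \<partial>\<nu>)"
    and "(\<integral>x. (P f x)\<^sup>2 \<partial>\<nu>) \<le> (\<integral>x. (f x)\<^sup>2 \<partial>\<nu>)"
proof -
  have fm[measurable]: "f \<in> borel_measurable borel"
    using f by (simp add: sq_integrable_def measurable_stationary_iff)
  have f2m: "(\<lambda>y. (f y)\<^sup>2) \<in> borel_measurable borel"
    by measurable
  have int: "integrable (\<nu> \<bind> K) f" "integrable (\<nu> \<bind> K) (\<lambda>y. (f y)\<^sup>2)"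
    using f sq_integrable_integrable[OF f] by (simp_all add: bind_stationary sq_integrable_def)
  note bind_facts = AE_integrable_kernel_of_integrable_bind[OF kernel_subprob_stationary fm int(1)]
    AE_integrable_kernel_of_integrable_bind[OF kernel_subprob_stationary f2m int(2)]
    integrable_kernel_integral_of_integrable_bind[OF kernel_subprob_stationary f2m int(2)]
    integral_bind_of_integrable[OF kernel_subprob_stationary fm int(1)]
    integral_bind_of_integrable[OF kernel_subprob_stationary f2m int(2)]
  show "(\<integral>x. P f x \<partial>\<nu>) = (\<integral>x. f x \<partial>\<nu>)"
    using bind_facts by (simp add: bind_stationary markov_op_def)
  have Jensen: "AE x in \<nu>. (P f x)\<^sup>2 \<le> (\<integral>y. (f y)\<^sup>2 \<partial>K x)"
    using bind_facts(1,2) unfolding markov_op_def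
    by eventually_elim (rule prob_space.integral_square_le_integral_of_square[OF prob_space_kernel])
  have "P f \<in> borel_measurable borel"
    by (rule measurable_markov_op) measurable
  moreover have "integrable \<nu> (\<lambda>x. (P f x)\<^sup>2)"
    by (rule Bochner_Integration.integrable_bound[OF bind_facts(3)])
      (use \<open>P f \<in> borel_measurable borel\<close> Jensen in \<open>auto simp: measurable_stationary_iff\<close>)
  ultimately show "sq_integrable \<nu> (P f)"
    by (simp add: sq_integrable_def measurable_stationary_iff)
  have "(\<integral>x. (P f x)\<^sup>2 \<partial>\<nu>) \<le> (\<integral>x. (\<integral>y. (f y)\<^sup>2 \<partial>K x) \<partial>\<nu>)"
    by (rule integral_mono_AE[OF \<open>integrable \<nu> (\<lambda>x. (P f x)\<^sup>2)\<close> bind_facts(3) Jensen])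
  also have "\<dots> = (\<integral>x. (f x)\<^sup>2 \<partial>\<nu>)"
    using bind_facts(5) by (simp add: bind_stationary)
  finally show "(\<integral>x. (P f x)\<^sup>2 \<partial>\<nu>) \<le> (\<integral>x. (f x)\<^sup>2 \<partial>\<nu>)" .
qed

lemma markov_op_power_stationary:
  assumes f: "sq_integrable \<nu> f"
  shows "sq_integrable \<nu> ((P ^^ k) f)"
    and "(\<integral>x. (P ^^ k) f x \<partial>\<nu>) = (\<integral>x. f x \<partial>\<nu>)"
    and "(\<integral>x. ((P ^^ k) f x)\<^sup>2 \<partial>\<nu>) \<le> (\<integral>x. (f x)\<^sup>2 \<partial>\<nu>)"
proof -
  have "sq_integrable \<nu> ((P ^^ k) f) \<and> (\<integral>x. (P ^^ k) f x \<partial>\<nu>) = (\<integral>x. f x \<partial>\<nu>)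
     \<and> (\<integral>x. ((P ^^ k) f x)\<^sup>2 \<partial>\<nu>) \<le> (\<integral>x. (f x)\<^sup>2 \<partial>\<nu>)"
    by (induction k) (use f markov_op_stationary in \<open>auto intro: order_trans\<close>)
  then show "sq_integrable \<nu> ((P ^^ k) f)" "(\<integral>x. (P ^^ k) f x \<partial>\<nu>) = (\<integral>x. f x \<partial>\<nu>)"
    "(\<integral>x. ((P ^^ k) f x)\<^sup>2 \<partial>\<nu>) \<le> (\<integral>x. (f x)\<^sup>2 \<partial>\<nu>)"
    by auto
qed

lemma markov_op_power_L2_0: "u \<in> L2_0 \<nu> \<Longrightarrow> (P ^^ k) u \<in> L2_0 \<nu>"
  using markov_op_power_stationary by (auto simp: L2_0_iff)

lemma markov_op_power_cmult: "(P ^^ k) (\<lambda>y. c * f y) = (\<lambda>x. c * (P ^^ k) f x)"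
  by (induction k) (simp_all add: markov_op_def)

abbreviation unit_pairs :: "(('a \<Rightarrow> real) \<times> ('a \<Rightarrow> real)) set" where
  "unit_pairs \<equiv> {(f, g). f \<in> L2_0 \<nu> \<and> g \<in> L2_0 \<nu> \<and> L2_norm \<nu> f \<le> 1 \<and> L2_norm \<nu> g \<le> 1}"

lemma inner_markov_op_power_le_1:
  assumes "(f, g) \<in> unit_pairs"
  shows "\<bar>L2_inner \<nu> ((P ^^ k) f) ((P ^^ k) g)\<bar> \<le> 1"
proof -
  have f: "sq_integrable \<nu> f" "L2_norm \<nu> f \<le> 1" and g: "sq_integrable \<nu> g" "L2_norm \<nu> g \<le> 1"
    using assms by (auto simp: L2_0_iff)
  note Pf = markov_op_power_stationary[OF f(1), of k] and Pg = markov_op_power_stationary[OF g(1), of k]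
  have "\<bar>L2_inner \<nu> ((P ^^ k) f) ((P ^^ k) g)\<bar>
     \<le> sqrt (\<integral>x. ((P ^^ k) f x)\<^sup>2 \<partial>\<nu>) * sqrt (\<integral>x. ((P ^^ k) g x)\<^sup>2 \<partial>\<nu>)"
    unfolding L2_inner_def using Pf(1) Pg(1)
    by (intro Cauchy_Schwarz_integral(2)) (auto simp: sq_integrable_def)
  also have "\<dots> \<le> L2_norm \<nu> f * L2_norm \<nu> g"
    unfolding L2_norm_def by (intro mult_mono real_sqrt_le_mono Pf(3) Pg(3)) auto
  also have "\<dots> \<le> 1"
    using f(2) g(2) by (intro mult_le_one) (auto simp: L2_norm_def)
  finally show ?thesis .
qed

lemma bdd_above_inner_markov_op_power:
  "bdd_above ((\<lambda>fg. \<bar>L2_inner \<nu> ((P ^^ k) (fst fg)) ((P ^^ k) (snd fg))\<bar>) ` unit_pairs)"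
  using inner_markov_op_power_le_1 by (intro bdd_aboveI[where M=1]) auto

lemma inner_markov_op_power_le_adjpow_norm:
  assumes "(f, g) \<in> unit_pairs"
  shows "\<bar>L2_inner \<nu> ((P ^^ k) f) ((P ^^ k) g)\<bar> \<le> adjpow_norm \<nu> K k"
  using cSUP_upper[OF assms bdd_above_inner_markov_op_power] by (simp add: adjpow_norm_def)

lemma adjpow_norm_nonneg: "0 \<le> adjpow_norm \<nu> K k"
  using inner_markov_op_power_le_adjpow_norm[of "\<lambda>_. 0" "\<lambda>_. 0" k]
  by (simp add: L2_0_def L2_norm_def)

lemma adjpow_norm_le_1: "adjpow_norm \<nu> K k \<le> 1"
proof -
  have "((\<lambda>_. 0), (\<lambda>_. 0)) \<in> unit_pairs"
    by (simp add: L2_0_def L2_norm_def)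
  then show ?thesis
    unfolding adjpow_norm_def
    by (intro cSUP_least) (auto intro: inner_markov_op_power_le_1)
qed

lemma gamma2_adjpow_bounds: "0 \<le> gamma2_adjpow \<nu> K k" "gamma2_adjpow \<nu> K k \<le> 1"
  using adjpow_norm_nonneg adjpow_norm_le_1 by (auto simp: gamma2_adjpow_def)

lemma integral_square_markov_op_power_le:
  assumes u: "u \<in> L2_0 \<nu>"
  shows "(\<integral>x. ((P ^^ k) u x)\<^sup>2 \<partial>\<nu>) \<le> adjpow_norm \<nu> K k * (\<integral>x. (u x)\<^sup>2 \<partial>\<nu>)"
proof (cases "L2_norm \<nu> u = 0")
  case True
  then show ?thesis
    using markov_op_power_stationary(3)[of u k] u
    by (simp add: L2_0_iff L2_norm_def)
next
  case False
  define n where "n = L2_norm \<nu> u"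
  have n: "0 < n" "n\<^sup>2 = (\<integral>x. (u x)\<^sup>2 \<partial>\<nu>)"
    using False by (auto simp: n_def L2_norm_def less_le)
  \<comment> \<open>rescale u to a unit vector and compare with the supremum defining the norm\<close>
  define v where "v = (\<lambda>x. u x / n)"
  have "v \<in> L2_0 \<nu>"
    using u by (auto simp: L2_0_def v_def power_divide)
  moreover have "L2_norm \<nu> v = 1"
    using n(1) by (simp add: L2_norm_def v_def power_divide flip: n(2))
  ultimately have "\<bar>L2_inner \<nu> ((P ^^ k) v) ((P ^^ k) v)\<bar> \<le> adjpow_norm \<nu> K k"
    by (intro inner_markov_op_power_le_adjpow_norm) simp
  moreover have "L2_inner \<nu> ((P ^^ k) v) ((P ^^ k) v) = (\<integral>x. ((P ^^ k) u x)\<^sup>2 \<partial>\<nu>) / n\<^sup>2"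
    using markov_op_power_cmult[of k "1 / n" u]
    by (simp add: v_def L2_inner_def power2_eq_square)
  ultimately have "(\<integral>x. ((P ^^ k) u x)\<^sup>2 \<partial>\<nu>) / n\<^sup>2 \<le> adjpow_norm \<nu> K k"
    by simp
  then show ?thesis
    unfolding n(2)[symmetric] using n(1) by (simp add: pos_divide_le_eq mult.commute)
qed

lemma integral_square_markov_op_power_decay:
  assumes "u \<in> L2_0 \<nu>"
  shows "(\<integral>x. ((P ^^ m) u x)\<^sup>2 \<partial>\<nu>) \<le> (1 - gamma2_adjpow \<nu> K k) ^ (m div k) * (\<integral>x. (u x)\<^sup>2 \<partial>\<nu>)"
proof -
  have "(\<integral>x. ((P ^^ (q * k + r)) u x)\<^sup>2 \<partial>\<nu>) \<le> (1 - gamma2_adjpow \<nu> K k) ^ q * (\<integral>x. (u x)\<^sup>2 \<partial>\<nu>)"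
    if "u \<in> L2_0 \<nu>" for q r u
    using that
  proof (induction q arbitrary: u)
    case 0
    then show ?case
      using markov_op_power_stationary(3)[of u r] by (simp add: L2_0_iff)
  next
    case (Suc q)
    have "Suc q * k + r = (q * k + r) + k"
      by simp
    then have "(P ^^ (Suc q * k + r)) u = (P ^^ (q * k + r)) ((P ^^ k) u)"
      by (simp only: funpow_add comp_def)
    then have "(\<integral>x. ((P ^^ (Suc q * k + r)) u x)\<^sup>2 \<partial>\<nu>)
        \<le> (1 - gamma2_adjpow \<nu> K k) ^ q * (\<integral>x. ((P ^^ k) u x)\<^sup>2 \<partial>\<nu>)"
      using Suc.IH[OF markov_op_power_L2_0[OF Suc.prems]] by simp
    also have "\<dots> \<le> (1 - gamma2_adjpow \<nu> K k) ^ q * ((1 - gamma2_adjpow \<nu> K k) * (\<integral>x. (u x)\<^sup>2 \<partial>\<nu>))"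
      using integral_square_markov_op_power_le[OF Suc.prems, of k] gamma2_adjpow_bounds[of k]
      by (intro mult_left_mono) (auto simp: gamma2_adjpow_def)
    finally show ?case
      by (simp add: mult_ac)
  qed
  from this[OF assms, of "m div k" "m mod k"] show ?thesis
    by simp
qed

lemma autocovariance_bound:
  assumes g: "g \<in> L2_0 \<nu>"
  shows "\<bar>\<integral>x. g x * (P ^^ m) g x \<partial>\<nu>\<bar>
    \<le> (\<integral>x. (g x)\<^sup>2 \<partial>\<nu>) * sqrt (1 - gamma2_adjpow \<nu> K k) ^ (m div k)"
proof -
  have gm: "sq_integrable \<nu> g" "sq_integrable \<nu> ((P ^^ m) g)"
    using g markov_op_power_stationary(1) by (auto simp: L2_0_iff)
  have "\<bar>\<integral>x. g x * (P ^^ m) g x \<partial>\<nu>\<bar> \<le> sqrt (\<integral>x. (g x)\<^sup>2 \<partial>\<nu>) * sqrt (\<integral>x. ((P ^^ m) g x)\<^sup>2 \<partial>\<nu>)"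
    using gm by (intro Cauchy_Schwarz_integral(2)) (auto simp: sq_integrable_def)
  also have "\<dots> \<le> sqrt (\<integral>x. (g x)\<^sup>2 \<partial>\<nu>)
      * sqrt ((1 - gamma2_adjpow \<nu> K k) ^ (m div k) * (\<integral>x. (g x)\<^sup>2 \<partial>\<nu>))"
    by (intro mult_left_mono real_sqrt_le_mono integral_square_markov_op_power_decay[OF g]) auto
  also have "\<dots> = (\<integral>x. (g x)\<^sup>2 \<partial>\<nu>) * sqrt (1 - gamma2_adjpow \<nu> K k) ^ (m div k)"
    using gamma2_adjpow_bounds[of k] by (simp add: real_sqrt_mult real_sqrt_power)
  finally show ?thesis .
qed

lemma autocovariance_sum_bound:
  assumes g: "g \<in> L2_0 \<nu>" and k: "1 \<le> k" and gap: "0 < gamma2_adjpow \<nu> K k"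
  shows "(\<Sum>m<M. \<bar>\<integral>x. g x * (P ^^ m) g x \<partial>\<nu>\<bar>)
    \<le> (\<integral>x. (g x)\<^sup>2 \<partial>\<nu>) * (2 * real k / gamma2_adjpow \<nu> K k)"
proof -
  define \<rho> where "\<rho> = sqrt (1 - gamma2_adjpow \<nu> K k)"
  have \<rho>: "0 \<le> \<rho>" "\<rho> < 1"
    using gamma2_adjpow_bounds[of k] gap by (auto simp: \<rho>_def)
  have "(\<Sum>m<M. \<bar>\<integral>x. g x * (P ^^ m) g x \<partial>\<nu>\<bar>) \<le> (\<Sum>m<M. (\<integral>x. (g x)\<^sup>2 \<partial>\<nu>) * \<rho> ^ (m div k))"
    unfolding \<rho>_def by (intro sum_mono autocovariance_bound[OF g])
  also have "\<dots> \<le> (\<integral>x. (g x)\<^sup>2 \<partial>\<nu>) * (real k / (1 - \<rho>))"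
    unfolding sum_distrib_left[symmetric] by (intro mult_left_mono sum_power_div_le[OF \<rho> k]) auto
  also have "\<dots> \<le> (\<integral>x. (g x)\<^sup>2 \<partial>\<nu>) * (2 * real k / gamma2_adjpow \<nu> K k)"
  proof (intro mult_left_mono)
    show "real k / (1 - \<rho>) \<le> 2 * real k / gamma2_adjpow \<nu> K k"
      using mult_left_mono[OF inverse_one_minus_sqrt_le[OF gap gamma2_adjpow_bounds(2)], of "real k"]
      by (simp add: \<rho>_def mult.commute)
  qed simp
  finally show ?thesis .
qed

lemma bdd_above_gamma2_adjpow_ratio: "bdd_above ((\<lambda>k. gamma2_adjpow \<nu> K k / real k) ` {1..})"
proof (rule bdd_aboveI[where M=1])
  fix y assume "y \<in> (\<lambda>k. gamma2_adjpow \<nu> K k / real k) ` {1..}"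
  then obtain k where "1 \<le> k" "y = gamma2_adjpow \<nu> K k / real k"
    by auto
  then show "y \<le> 1"
    using gamma2_adjpow_bounds[of k] by (simp add: divide_le_eq)
qed

lemma gamma2_adjpow_ratio_le_pseudo_gap: "1 \<le> k \<Longrightarrow> gamma2_adjpow \<nu> K k / real k \<le> pseudo_gap \<nu> K"
  unfolding pseudo_gap_def by (rule cSUP_upper[OF _ bdd_above_gamma2_adjpow_ratio]) simp

lemma pseudo_gap_nonneg: "0 \<le> pseudo_gap \<nu> K"
  using gamma2_adjpow_ratio_le_pseudo_gap[of 1] gamma2_adjpow_bounds(1)[of 1] by simp

abbreviation stationary_path :: "nat \<Rightarrow> (nat \<Rightarrow> 'a) measure" where
  "stationary_path n \<equiv> chain_path borel \<nu> K n"

lemmas sets_stationary_path = sets_chain_path[OF prob_space_stationary sets_stationary]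

lemma measurable_path_component: "i \<le> n \<Longrightarrow> (\<lambda>\<omega>. \<omega> i) \<in> stationary_path n \<rightarrow>\<^sub>M borel"
  by (simp add: measurable_cong_sets[OF sets_stationary_path refl])

lemma nn_integral_path_component:
  assumes "\<phi> \<in> borel_measurable borel" "i \<le> n"
  shows "(\<integral>\<^sup>+\<omega>. \<phi> (\<omega> i) \<partial>stationary_path n) = (\<integral>\<^sup>+x. \<phi> x \<partial>\<nu>)"
  using assms
proof (induction n arbitrary: i \<phi>)
  case 0
  then show ?case
    using sets_stationary by (simp add: nn_integral_distr measurable_restrict)
next
  case (Suc n)
  have [measurable]: "\<phi> \<in> borel_measurable borel"
    by (fact Suc.prems(1))
  have step: "(\<integral>\<^sup>+\<omega>. \<phi> (\<omega> i) \<partial>stationary_path (Suc n))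
     = (\<integral>\<^sup>+\<omega>. (\<integral>\<^sup>+y. \<phi> (fun_upd \<omega> (Suc n) y i) \<partial>K (\<omega> n)) \<partial>stationary_path n)"
    using Suc.prems by (intro nn_integral_chain_path_Suc[OF prob_space_stationary sets_stationary]) simp
  show ?case
  proof (cases "i \<le> n")
    case True
    then show ?thesis
      using step Suc.IH[OF Suc.prems(1) True] prob_space.emeasure_space_1[OF prob_space_kernel]
      by simp
  next
    case False
    then have "i = Suc n"
      using Suc.prems by simp
    moreover have "(\<lambda>x. \<integral>\<^sup>+y. \<phi> y \<partial>K x) \<in> borel_measurable borel"
      by (rule measurable_compose[OF kernel_subprob nn_integral_measurable_subprob_algebra]) simp
    ultimately show ?thesis
      using step Suc.IH[of "\<lambda>x. \<integral>\<^sup>+y. \<phi> y \<partial>K x" n]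
        nn_integral_bind[OF Suc.prems(1) kernel_subprob_stationary]
      by (simp add: bind_stationary)
  qed
qed

lemma distr_path_component:
  assumes "i \<le> n"
  shows "distr (stationary_path n) borel (\<lambda>\<omega>. \<omega> i) = \<nu>"
proof (rule measure_eqI)
  fix A assume "A \<in> sets (distr (stationary_path n) borel (\<lambda>\<omega>. \<omega> i))"
  then have A: "A \<in> sets borel"
    by simp
  have "emeasure (distr (stationary_path n) borel (\<lambda>\<omega>. \<omega> i)) A
      = (\<integral>\<^sup>+x. indicator A x \<partial>distr (stationary_path n) borel (\<lambda>\<omega>. \<omega> i))"
    using A by simp
  also have "\<dots> = (\<integral>\<^sup>+\<omega>. indicator A (\<omega> i) \<partial>stationary_path n)"
    using A by (intro nn_integral_distr measurable_path_component[OF assms]) simp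
  also have "\<dots> = emeasure \<nu> A"
    using A assms by (simp add: nn_integral_path_component sets_stationary)
  finally show "emeasure (distr (stationary_path n) borel (\<lambda>\<omega>. \<omega> i)) A = emeasure \<nu> A" .
qed (simp add: sets_stationary)

lemma integral_path_component:
  fixes \<phi> :: "'a \<Rightarrow> real"
  assumes "\<phi> \<in> borel_measurable borel" "i \<le> n"
  shows "(\<integral>\<omega>. \<phi> (\<omega> i) \<partial>stationary_path n) = (\<integral>x. \<phi> x \<partial>\<nu>)"
  using integral_distr[OF measurable_path_component[OF assms(2)] assms(1)]
  by (simp add: distr_path_component[OF assms(2)])

lemma sq_integrable_path_component:
  assumes "sq_integrable \<nu> f" "i \<le> n"
  shows "sq_integrable (stationary_path n) (\<lambda>\<omega>. f (\<omega> i))"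
proof -
  have [measurable]: "f \<in> borel_measurable borel"
    using assms(1) by (simp add: sq_integrable_def measurable_stationary_iff)
  have "integrable (distr (stationary_path n) borel (\<lambda>\<omega>. \<omega> i)) (\<lambda>x. (f x)\<^sup>2)"
    using assms by (simp add: distr_path_component sq_integrable_def)
  then show ?thesis
    using measurable_path_component[OF assms(2)]
    by (simp add: sq_integrable_def integrable_distr_eq)
qed

lemma integrable_path_components_product:
  assumes "sq_integrable \<nu> f" "sq_integrable \<nu> g" "i \<le> n" "j \<le> n"
  shows "integrable (stationary_path n) (\<lambda>\<omega>. f (\<omega> i) * g (\<omega> j))"
  using sq_integrable_path_component[OF assms(1,3)] sq_integrable_path_component[OF assms(2,4)]
  by (intro Cauchy_Schwarz_integral(1)) (auto simp: sq_integrable_def)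

lemma integral_path_same_component:
  assumes "sq_integrable \<nu> f" "sq_integrable \<nu> g" "i \<le> n"
  shows "(\<integral>\<omega>. f (\<omega> i) * g (\<omega> i) \<partial>stationary_path n) = (\<integral>x. f x * g x \<partial>\<nu>)"
  using assms by (intro integral_path_component borel_measurable_times)
    (simp_all add: sq_integrable_def measurable_stationary_iff)

lemma integral_path_Suc_earlier_components:
  assumes f: "sq_integrable \<nu> f" and g: "sq_integrable \<nu> g" and "i \<le> n" "j \<le> n"
  shows "(\<integral>\<omega>. f (\<omega> i) * g (\<omega> j) \<partial>stationary_path (Suc n)) = (\<integral>\<omega>. f (\<omega> i) * g (\<omega> j) \<partial>stationary_path n)"
proof -
  have [measurable]: "f \<in> borel_measurable borel" "g \<in> borel_measurable borel"
    using f g by (simp_all add: sq_integrable_def measurable_stationary_iff)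
  show ?thesis
    using assms prob_space.prob_space[OF prob_space_kernel]
    by (subst integral_chain_path_Suc[OF prob_space_stationary sets_stationary])
      (simp_all add: integrable_path_components_product del: chain_path.simps)
qed

lemma integral_path_Suc_last_component:
  assumes f: "sq_integrable \<nu> f" and g: "sq_integrable \<nu> g" and "i \<le> n"
  shows "(\<integral>\<omega>. f (\<omega> i) * g (\<omega> (Suc n)) \<partial>stationary_path (Suc n)) = (\<integral>\<omega>. f (\<omega> i) * P g (\<omega> n) \<partial>stationary_path n)"
proof -
  have [measurable]: "f \<in> borel_measurable borel" "g \<in> borel_measurable borel"
    using f g by (simp_all add: sq_integrable_def measurable_stationary_iff)
  show ?thesis
    using assms
    by (subst integral_chain_path_Suc[OF prob_space_stationary sets_stationary])
      (simp_all add: integrable_path_components_product markov_op_def del: chain_path.simps)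
qed

lemma integral_path_components_product:
  assumes f: "sq_integrable \<nu> f" and g: "sq_integrable \<nu> g" and "i \<le> j" "j \<le> n"
  shows "(\<integral>\<omega>. f (\<omega> i) * g (\<omega> j) \<partial>stationary_path n) = (\<integral>x. f x * (P ^^ (j - i)) g x \<partial>\<nu>)"
  using g assms(3,4)
proof (induction n arbitrary: j g)
  case 0
  then show ?case
    using integral_path_same_component[OF f, of g 0 0] by simp
next
  case (Suc n)
  consider "j = i" | "j \<le> n" | "i \<le> n" "j = Suc n"
    using Suc.prems by linarith
  then show ?case
  proof cases
    case 1
    then show ?thesis
      using integral_path_same_component[OF f Suc.prems(1), of i "Suc n"] Suc.prems by simp
  next
    case 2
    then show ?thesis
      using Suc.IH[OF Suc.prems(1,2)] integral_path_Suc_earlier_components[OF f Suc.prems(1)] Suc.prems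
      by simp
  next
    case 3
    then have "(\<integral>\<omega>. f (\<omega> i) * g (\<omega> j) \<partial>stationary_path (Suc n))
        = (\<integral>x. f x * (P ^^ (n - i)) (P g) x \<partial>\<nu>)"
      using integral_path_Suc_last_component[OF f Suc.prems(1)]
        Suc.IH[OF markov_op_stationary(1)[OF Suc.prems(1)]] by simp
    then show ?thesis
      using 3 by (simp add: Suc_diff_le funpow_swap1)
  qed
qed

end

section \<open>Mean squared error of ergodic averages\<close>

definition ergodic_average :: "nat \<Rightarrow> nat \<Rightarrow> ('a \<Rightarrow> real) \<Rightarrow> (nat \<Rightarrow> 'a) \<Rightarrow> real" where
  "ergodic_average N nb g \<omega> = 1 / real N * (\<Sum>n = 1..N. g (\<omega> (n + nb)))"

lemma square_ergodic_average:
  "(ergodic_average N nb g \<omega>)\<^sup>2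
    = (1 / real N)\<^sup>2 * (\<Sum>a\<in>{1..N}. \<Sum>b\<in>{1..N}. g (\<omega> (a + nb)) * g (\<omega> (b + nb)))"
  by (simp add: ergodic_average_def power_mult_distrib power2_eq_square sum_product)

context stationary_markov_kernel
begin

lemma abs_integral_path_components_product:
  assumes g: "sq_integrable \<nu> g" and "a \<le> n" "b \<le> n"
  shows "\<bar>\<integral>\<omega>. g (\<omega> a) * g (\<omega> b) \<partial>stationary_path n\<bar>
    = \<bar>\<integral>x. g x * (P ^^ (if a \<le> b then b - a else a - b)) g x \<partial>\<nu>\<bar>"
proof (cases "a \<le> b")
  case True
  then show ?thesis
    using assms integral_path_components_product[OF g g, of a b n] by simp
next
  case False
  then show ?thesis
    using assms integral_path_components_product[OF g g, of b a n] by (simp add: mult.commute)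
qed

lemma stationary_mse_le_autocovariances:
  fixes N nb :: nat
  assumes g: "g \<in> L2_0 \<nu>"
  shows "integrable (stationary_path (N + nb)) (\<lambda>\<omega>. (ergodic_average N nb g \<omega>)\<^sup>2)"
    and "(\<integral>\<omega>. (ergodic_average N nb g \<omega>)\<^sup>2 \<partial>stationary_path (N + nb))
      \<le> 2 / real N * (\<Sum>m<N. \<bar>\<integral>x. g x * (P ^^ m) g x \<partial>\<nu>\<bar>)"
proof -
  have sq: "sq_integrable \<nu> g"
    using g by (simp add: L2_0_iff)
  define c where "c a b = (\<integral>\<omega>. g (\<omega> (a + nb)) * g (\<omega> (b + nb)) \<partial>stationary_path (N + nb))" for a b
  have int: "integrable (stationary_path (N + nb)) (\<lambda>\<omega>. g (\<omega> (a + nb)) * g (\<omega> (b + nb)))"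
    if "a \<in> {1..N}" "b \<in> {1..N}" for a b
    using that by (intro integrable_path_components_product[OF sq sq]) auto
  then show "integrable (stationary_path (N + nb)) (\<lambda>\<omega>. (ergodic_average N nb g \<omega>)\<^sup>2)"
    unfolding square_ergodic_average by (intro integrable_mult_right Bochner_Integration.integrable_sum) auto
  have c_le: "\<bar>c a b\<bar> \<le> \<bar>\<integral>x. g x * (P ^^ (if a \<le> b then b - a else a - b)) g x \<partial>\<nu>\<bar>"
    if "a \<in> {1..N}" "b \<in> {1..N}" for a b
    using that abs_integral_path_components_product[OF sq, of "a + nb" "N + nb" "b + nb"]
    by (simp add: c_def)
  have "(\<integral>\<omega>. (\<Sum>a\<in>{1..N}. \<Sum>b\<in>{1..N}. g (\<omega> (a + nb)) * g (\<omega> (b + nb))) \<partial>stationary_path (N + nb))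
      = (\<Sum>a\<in>{1..N}. \<Sum>b\<in>{1..N}. c a b)"
    unfolding c_def using int
    by (subst Bochner_Integration.integral_sum)
      (auto intro!: Bochner_Integration.integrable_sum sum.cong Bochner_Integration.integral_sum)
  then have "(\<integral>\<omega>. (ergodic_average N nb g \<omega>)\<^sup>2 \<partial>stationary_path (N + nb))
      = (1 / real N)\<^sup>2 * (\<Sum>a\<in>{1..N}. \<Sum>b\<in>{1..N}. c a b)"
    by (simp add: square_ergodic_average)
  also have "\<dots> \<le> (1 / real N)\<^sup>2
      * (\<Sum>a\<in>{1..N}. \<Sum>b\<in>{1..N}. \<bar>\<integral>x. g x * (P ^^ (if a \<le> b then b - a else a - b)) g x \<partial>\<nu>\<bar>)"
    using c_le by (intro mult_left_mono sum_mono) (auto simp: abs_le_iff)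
  also have "\<dots> \<le> (1 / real N)\<^sup>2 * (\<Sum>a\<in>{1..N}. 2 * (\<Sum>m<N. \<bar>\<integral>x. g x * (P ^^ m) g x \<partial>\<nu>\<bar>))"
    by (intro mult_left_mono sum_mono sum_distance_le) auto
  also have "\<dots> = 2 / real N * (\<Sum>m<N. \<bar>\<integral>x. g x * (P ^^ m) g x \<partial>\<nu>\<bar>)"
    by (simp add: power2_eq_square)
  finally show "(\<integral>\<omega>. (ergodic_average N nb g \<omega>)\<^sup>2 \<partial>stationary_path (N + nb))
      \<le> 2 / real N * (\<Sum>m<N. \<bar>\<integral>x. g x * (P ^^ m) g x \<partial>\<nu>\<bar>)" .
qed

lemma stationary_mse_le_variance:
  assumes g: "g \<in> L2_0 \<nu>"
  shows "(\<integral>\<omega>. (ergodic_average N nb g \<omega>)\<^sup>2 \<partial>stationary_path (N + nb)) \<le> 2 * (\<integral>x. (g x)\<^sup>2 \<partial>\<nu>)"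
proof -
  have "(\<Sum>m<N. \<bar>\<integral>x. g x * (P ^^ m) g x \<partial>\<nu>\<bar>) \<le> (\<Sum>m<N. \<integral>x. (g x)\<^sup>2 \<partial>\<nu>)"
    \<comment> \<open>for k = 0 the decay factor is 1, as m div 0 = 0\<close>
    using autocovariance_bound[OF g, where k=0] by (intro sum_mono) simp
  then have "2 / real N * (\<Sum>m<N. \<bar>\<integral>x. g x * (P ^^ m) g x \<partial>\<nu>\<bar>) \<le> 2 * (\<integral>x. (g x)\<^sup>2 \<partial>\<nu>)"
    by (cases "N = 0") (simp_all add: field_simps)
  then show ?thesis
    using stationary_mse_le_autocovariances(2)[OF g] by (rule order_trans[rotated])
qed

lemma pseudo_gap_stationary_mse_le:
  assumes g: "g \<in> L2_0 \<nu>"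
  shows "pseudo_gap \<nu> K * (real N * (\<integral>\<omega>. (ergodic_average N nb g \<omega>)\<^sup>2 \<partial>stationary_path (N + nb)))
    \<le> 4 * (\<integral>x. (g x)\<^sup>2 \<partial>\<nu>)"
proof -
  define E where "E = real N * (\<integral>\<omega>. (ergodic_average N nb g \<omega>)\<^sup>2 \<partial>stationary_path (N + nb))"
  define V where "V = (\<integral>x. (g x)\<^sup>2 \<partial>\<nu>)"
  have "E \<ge> 0" "V \<ge> 0"
    by (simp_all add: E_def V_def)
  have E_le: "E \<le> 2 * (\<Sum>m<N. \<bar>\<integral>x. g x * (P ^^ m) g x \<partial>\<nu>\<bar>)"
    using stationary_mse_le_autocovariances(2)[OF g, of N nb]
    by (cases "N = 0") (simp_all add: E_def field_simps)
  have gap_k: "gamma2_adjpow \<nu> K k / real k * E \<le> 4 * V" if k: "1 \<le> k" for k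
  proof (cases "gamma2_adjpow \<nu> K k = 0")
    case False
    then have gap: "0 < gamma2_adjpow \<nu> K k"
      using gamma2_adjpow_bounds(1)[of k] by simp
    have "E \<le> 2 * (V * (2 * real k / gamma2_adjpow \<nu> K k))"
      using E_le autocovariance_sum_bound[OF g k gap, of N] by (simp add: V_def)
    then show ?thesis
      using gap k by (simp add: field_simps)
  qed (use \<open>V \<ge> 0\<close> in simp)
  have "pseudo_gap \<nu> K * E \<le> 4 * V"
  proof (cases "E = 0")
    case False
    then have "pseudo_gap \<nu> K \<le> 4 * V / E"
      unfolding pseudo_gap_def using gap_k \<open>E \<ge> 0\<close>
      by (intro cSUP_least) (auto simp: pos_le_divide_eq)
    then show ?thesis
      using False \<open>E \<ge> 0\<close> by (simp add: pos_le_divide_eq)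
  qed (simp add: \<open>V \<ge> 0\<close>)
  then show ?thesis
    by (simp add: E_def V_def)
qed

lemma mse_le_stationary_mse:
  assumes g: "g \<in> L2_0 \<nu>" and \<nu>0: "prob_space \<nu>0" "sets \<nu>0 = sets borel" and "0 \<le> C"
    and initial_le: "\<And>G. G \<in> borel_measurable borel \<Longrightarrow> (\<integral>\<^sup>+x. G x \<partial>\<nu>0) \<le> ennreal C * (\<integral>\<^sup>+x. G x \<partial>\<nu>)"
  shows "(\<integral>\<omega>. (ergodic_average N nb g \<omega>)\<^sup>2 \<partial>chain_path borel \<nu>0 K (N + nb))
    \<le> C * (\<integral>\<omega>. (ergodic_average N nb g \<omega>)\<^sup>2 \<partial>stationary_path (N + nb))"
proof -
  let ?Z2 = "\<lambda>\<omega>. (ergodic_average N nb g \<omega>)\<^sup>2"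
  have [measurable]: "g \<in> borel_measurable borel"
    using g by (simp add: L2_0_def measurable_stationary_iff)
  have Z2_meas: "?Z2 \<in> borel_measurable (paths (N + nb))"
    unfolding ergodic_average_def by measurable
  have int: "integrable (stationary_path (N + nb)) ?Z2"
    by (rule stationary_mse_le_autocovariances(1)[OF g])
  have "(\<integral>\<^sup>+\<omega>. ?Z2 \<omega> \<partial>chain_path borel \<nu>0 K (N + nb)) \<le> ennreal C * (\<integral>\<^sup>+\<omega>. ?Z2 \<omega> \<partial>stationary_path (N + nb))"
    using Z2_meas by (intro nn_integral_chain_path_le[OF \<nu>0 prob_space_stationary sets_stationary initial_le]) auto
  also have "\<dots> = ennreal (C * (\<integral>\<omega>. ?Z2 \<omega> \<partial>stationary_path (N + nb)))"
    using \<open>0 \<le> C\<close> by (simp add: nn_integral_eq_integral[OF int] ennreal_mult)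
  finally show ?thesis
    using Z2_meas \<open>0 \<le> C\<close>
    by (simp add: integral_eq_nn_integral measurable_cong_sets[OF sets_chain_path[OF \<nu>0] refl]
        enn2real_leI)
qed

end

section \<open>The coupled Metropolis-Hastings kernel\<close>

lemma mh_alpha_nonneg: "(\<And>x. 0 \<le> p x) \<Longrightarrow> (\<And>x. 0 \<le> Q x) \<Longrightarrow> 0 \<le> mh_alpha p Q t z"
  by (simp add: mh_alpha_def)

lemma mh_alpha_le_1: "mh_alpha p Q t z \<le> 1"
  by (simp add: mh_alpha_def)

lemma countably_additive_nn_integral_indicator:
  assumes [measurable]: "\<phi> \<in> M \<rightarrow>\<^sub>M N" "f \<in> borel_measurable M"
  shows "countably_additive (sets N) (\<lambda>A. \<integral>\<^sup>+z. f z * indicator A (\<phi> z) \<partial>M)"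
proof (rule countably_additiveI)
  fix A :: "nat \<Rightarrow> _" assume A: "range A \<subseteq> sets N" "disjoint_family A"
  then have "(\<Sum>i. \<integral>\<^sup>+z. f z * indicator (A i) (\<phi> z) \<partial>M) = (\<integral>\<^sup>+z. (\<Sum>i. f z * indicator (A i) (\<phi> z)) \<partial>M)"
    by (intro nn_integral_suminf[symmetric]) auto
  then show "(\<Sum>i. \<integral>\<^sup>+z. f z * indicator (A i) (\<phi> z) \<partial>M) = (\<integral>\<^sup>+z. f z * indicator (\<Union>i. A i) (\<phi> z) \<partial>M)"
    by (simp add: ennreal_suminf_cmult suminf_indicator[OF A(2)])
qed

lemma countably_additive_point_mass:
  "countably_additive (sets N) (\<lambda>A. c * indicator A x :: ennreal)"
  by (rule countably_additiveI) (simp add: ennreal_suminf_cmult suminf_indicator)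

lemma countably_additive_add:
  fixes f g :: "'a set \<Rightarrow> ennreal"
  shows "countably_additive M f \<Longrightarrow> countably_additive M g \<Longrightarrow> countably_additive M (\<lambda>A. f A + g A)"
  by (simp add: countably_additive_def suminf_add[symmetric])

locale coupled_densities =
  fixes mu :: "'a::second_countable_topology measure" and Q p0 p1 :: "'a \<Rightarrow> real"
  assumes sigma_finite: "sigma_finite_measure mu" and sets_mu: "sets mu = sets borel"
    and measurable_densities[measurable]:
      "Q \<in> borel_measurable borel" "p0 \<in> borel_measurable borel" "p1 \<in> borel_measurable borel"
    and nonneg: "\<And>x. 0 \<le> Q x" "\<And>x. 0 \<le> p0 x" "\<And>x. 0 \<le> p1 x"
    and integrable_Q: "integrable mu Q" and integral_Q: "(\<integral>x. Q x \<partial>mu) = 1"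
begin

abbreviation K :: "'a \<times> 'a \<Rightarrow> ('a \<times> 'a) measure" where
  "K \<equiv> coupled_kernel mu Q p0 p1"

definition move_both :: "'a \<Rightarrow> 'a \<Rightarrow> 'a \<Rightarrow> real" where
  "move_both t0 t1 z = min (mh_alpha p0 Q t0 z) (mh_alpha p1 Q t1 z) * Q z"

definition move_first :: "'a \<Rightarrow> 'a \<Rightarrow> 'a \<Rightarrow> real" where
  "move_first t0 t1 z = max 0 (mh_alpha p0 Q t0 z - mh_alpha p1 Q t1 z) * Q z"

definition move_second :: "'a \<Rightarrow> 'a \<Rightarrow> 'a \<Rightarrow> real" where
  "move_second t0 t1 z = max 0 (mh_alpha p1 Q t1 z - mh_alpha p0 Q t0 z) * Q z"

definition stay :: "'a \<Rightarrow> 'a \<Rightarrow> real" where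
  "stay t0 t1 = 1 - (\<integral>z. max (mh_alpha p0 Q t0 z) (mh_alpha p1 Q t1 z) * Q z \<partial>mu)"

definition transition_prob :: "'a \<Rightarrow> 'a \<Rightarrow> ('a \<times> 'a) set \<Rightarrow> real" where
  "transition_prob t0 t1 A =
      (\<integral>z. move_both t0 t1 z * indicator A (z, z) \<partial>mu)
    + (\<integral>z. move_first t0 t1 z * indicator A (z, t1) \<partial>mu)
    + (\<integral>z. move_second t0 t1 z * indicator A (t0, z) \<partial>mu)
    + stay t0 t1 * indicator A (t0, t1)"

lemma coupled_kernel_eq:
  "K (t0, t1) = measure_of UNIV (sets borel) (\<lambda>A. ennreal (transition_prob t0 t1 A))"
  by (simp add: coupled_kernel_def transition_prob_def move_both_def move_first_def move_second_def
      stay_def ac_simps)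

lemma moves_bounded:
  "0 \<le> move_both t0 t1 z" "move_both t0 t1 z \<le> Q z"
  "0 \<le> move_first t0 t1 z" "move_first t0 t1 z \<le> Q z"
  "0 \<le> move_second t0 t1 z" "move_second t0 t1 z \<le> Q z"
  using mh_alpha_nonneg[of p0 Q t0 z, OF nonneg(2,1)] mh_alpha_nonneg[of p1 Q t1 z, OF nonneg(3,1)]
    mh_alpha_le_1[of p0 Q t0 z] mh_alpha_le_1[of p1 Q t1 z] nonneg(1)[of z]
  by (auto simp: move_both_def move_first_def move_second_def intro!: mult_left_le_one_le)

lemma moves_sum:
  "move_both t0 t1 z + move_first t0 t1 z + move_second t0 t1 z
    = max (mh_alpha p0 Q t0 z) (mh_alpha p1 Q t1 z) * Q z"
  by (auto simp: move_both_def move_first_def move_second_def max_def min_def algebra_simps)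

lemma measurable_moves[measurable]:
  "move_both t0 t1 \<in> borel_measurable borel" "move_first t0 t1 \<in> borel_measurable borel"
  "move_second t0 t1 \<in> borel_measurable borel"
  unfolding move_both_def move_first_def move_second_def mh_alpha_def by measurable

lemma integrable_dominated_by_Q:
  "f \<in> borel_measurable borel \<Longrightarrow> (\<And>z. \<bar>f z\<bar> \<le> Q z) \<Longrightarrow> integrable mu f"
  using integrable_Q by (rule Bochner_Integration.integrable_bound)
    (auto simp: measurable_cong_sets[OF sets_mu refl] abs_of_nonneg nonneg)

lemma stay_nonneg: "0 \<le> stay t0 t1"
proof -
  have bounded: "0 \<le> max (mh_alpha p0 Q t0 z) (mh_alpha p1 Q t1 z) * Q z"
    "max (mh_alpha p0 Q t0 z) (mh_alpha p1 Q t1 z) * Q z \<le> Q z" for z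
    using mh_alpha_nonneg[of p0 Q t0 z, OF nonneg(2,1)] mh_alpha_le_1[of p0 Q t0 z]
      mh_alpha_nonneg[of p1 Q t1 z, OF nonneg(3,1)] mh_alpha_le_1[of p1 Q t1 z] nonneg(1)[of z]
    by (auto intro: mult_left_le_one_le)
  have "(\<integral>z. max (mh_alpha p0 Q t0 z) (mh_alpha p1 Q t1 z) * Q z \<partial>mu) \<le> (\<integral>z. Q z \<partial>mu)"
    using bounded integrable_Q
    by (intro integral_mono integrable_dominated_by_Q) (simp_all add: mh_alpha_def nonneg)
  then show ?thesis
    by (simp add: stay_def integral_Q)
qed

lemma ennreal_integral_move:
  assumes "c \<in> borel_measurable borel" "\<And>z. 0 \<le> c z" "\<And>z. c z \<le> Q z"
    and [measurable]: "\<phi> \<in> borel \<rightarrow>\<^sub>M borel" "A \<in> sets borel"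
  shows "ennreal (\<integral>z. c z * indicator A (\<phi> z) \<partial>mu) = (\<integral>\<^sup>+z. ennreal (c z) * indicator A (\<phi> z) \<partial>mu)"
proof -
  note assms(1)[measurable]
  have "integrable mu (\<lambda>z. c z * indicator A (\<phi> z))"
    using assms(2,3) by (intro integrable_dominated_by_Q) (auto simp: indicator_def nonneg)
  then have "ennreal (\<integral>z. c z * indicator A (\<phi> z) \<partial>mu) = (\<integral>\<^sup>+z. ennreal (c z * indicator A (\<phi> z)) \<partial>mu)"
    using assms(2) by (subst nn_integral_eq_integral) auto
  also have "\<dots> = (\<integral>\<^sup>+z. ennreal (c z) * indicator A (\<phi> z) \<partial>mu)"
    by (intro nn_integral_cong) (simp add: indicator_def)
  finally show ?thesis .
qed

lemma ennreal_transition_prob: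
  assumes A: "A \<in> sets borel"
  shows "ennreal (transition_prob t0 t1 A) =
      (\<integral>\<^sup>+z. ennreal (move_both t0 t1 z) * indicator A (z, z) \<partial>mu)
    + (\<integral>\<^sup>+z. ennreal (move_first t0 t1 z) * indicator A (z, t1) \<partial>mu)
    + (\<integral>\<^sup>+z. ennreal (move_second t0 t1 z) * indicator A (t0, z) \<partial>mu)
    + ennreal (stay t0 t1) * indicator A (t0, t1)"
proof -
  have integral_move_nonneg: "0 \<le> (\<integral>z. c z * indicator A (\<phi> z) \<partial>mu)"
    if "\<And>z. 0 \<le> c z" for c :: "'a \<Rightarrow> real" and \<phi> :: "'a \<Rightarrow> 'a \<times> 'a"
    using that by (intro Bochner_Integration.integral_nonneg mult_nonneg_nonneg) simp_all
  show ?thesis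
    unfolding transition_prob_def using A moves_bounded[of t0 t1] stay_nonneg[of t0 t1]
    by (simp add: ennreal_plus integral_move_nonneg ennreal_integral_move ennreal_mult ennreal_indicator
        del: ennreal_plus_if)
qed

lemma countably_additive_transition_prob:
  "countably_additive (sets borel) (\<lambda>A. ennreal (transition_prob t0 t1 A))"
proof -
  have "countably_additive (sets borel) (\<lambda>A.
      (\<integral>\<^sup>+z. ennreal (move_both t0 t1 z) * indicator A (z, z) \<partial>mu)
    + (\<integral>\<^sup>+z. ennreal (move_first t0 t1 z) * indicator A (z, t1) \<partial>mu)
    + (\<integral>\<^sup>+z. ennreal (move_second t0 t1 z) * indicator A (t0, z) \<partial>mu)
    + ennreal (stay t0 t1) * indicator A (t0, t1))"
    by (intro countably_additive_add countably_additive_point_mass countably_additive_nn_integral_indicator)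
      (simp_all add: measurable_cong_sets[OF sets_mu refl])
  then show ?thesis
    unfolding countably_additive_def by (simp add: ennreal_transition_prob)
qed

lemma emeasure_coupled_kernel:
  "A \<in> sets borel \<Longrightarrow> emeasure (K (t0, t1)) A = ennreal (transition_prob t0 t1 A)"
  unfolding coupled_kernel_eq
  by (rule emeasure_measure_of_sigma[OF _ _ countably_additive_transition_prob])
    (simp_all add: positive_def transition_prob_def sets.sigma_algebra_axioms[of borel, simplified])

lemma sets_coupled_kernel: "sets (K \<theta>) = sets borel"
  using sets.sigma_sets_eq[of borel] by (cases \<theta>) (simp add: coupled_kernel_eq)

lemma prob_space_coupled_kernel: "prob_space (K \<theta>)"
proof -
  obtain t0 t1 where \<theta>: "\<theta> = (t0, t1)"
    by (cases \<theta>)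
  have "integrable mu (move_both t0 t1)" "integrable mu (move_first t0 t1)" "integrable mu (move_second t0 t1)"
    using moves_bounded[of t0 t1] by (auto intro!: integrable_dominated_by_Q)
  then have "transition_prob t0 t1 UNIV = 1"
    by (simp add: transition_prob_def stay_def moves_sum[symmetric])
  then show ?thesis
    using sets_eq_imp_space_eq[OF sets_coupled_kernel[of \<theta>]]
    by (intro prob_spaceI) (simp add: \<theta> emeasure_coupled_kernel)
qed

lemma measurable_integral_mu[measurable (raw)]:
  fixes f :: "_ \<Rightarrow> _ \<Rightarrow> real"
  assumes "(\<lambda>(\<theta>, z). f \<theta> z) \<in> borel_measurable (N \<Otimes>\<^sub>M borel)"
  shows "(\<lambda>\<theta>. \<integral>z. f \<theta> z \<partial>mu) \<in> borel_measurable N"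
  using sigma_finite_measure.borel_measurable_lebesgue_integral[OF sigma_finite, of f N] assms
  by (simp add: measurable_cong_sets[OF sets_pair_measure_cong[OF refl sets_mu] refl])

lemma measurable_transition_prob:
  assumes [measurable]: "A \<in> sets borel"
  shows "(\<lambda>\<theta>. transition_prob (fst \<theta>) (snd \<theta>) A) \<in> borel_measurable borel"
proof -
  have "(\<lambda>\<theta>. transition_prob (fst \<theta>) (snd \<theta>) A) \<in> borel_measurable (borel \<Otimes>\<^sub>M borel)"
    unfolding transition_prob_def move_both_def move_first_def move_second_def stay_def mh_alpha_def
    by measurable
  then show ?thesis
    by (simp add: borel_prod)
qed

lemma measurable_coupled_kernel: "K \<in> borel \<rightarrow>\<^sub>M prob_algebra borel"
proof (rule measurable_prob_algebra_generated[where \<Omega>=UNIV and G="sets borel"])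
  show "sets borel = sigma_sets UNIV (sets borel)"
    by (metis sets.sigma_sets_eq space_borel)
  fix A :: "('a \<times> 'a) set" assume A: "A \<in> sets borel"
  have "(\<lambda>\<theta>. emeasure (K \<theta>) A) = (\<lambda>\<theta>. ennreal (transition_prob (fst \<theta>) (snd \<theta>) A))"
    using A by (auto simp: emeasure_coupled_kernel)
  then show "(\<lambda>\<theta>. emeasure (K \<theta>) A) \<in> borel_measurable borel"
    using measurable_transition_prob[OF A] by simp
qed (auto simp: Int_stable_def prob_space_coupled_kernel sets_coupled_kernel)

end

sublocale coupled_densities \<subseteq> markov_kernel "coupled_kernel mu Q p0 p1"
  by unfold_locales (rule measurable_coupled_kernel)

theorem mainTheorem8:
  fixes mu :: "'a::{banach, second_countable_topology} measure"
    and pi :: "nat \<Rightarrow> 'a \<Rightarrow> real"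
    and Q :: "nat \<Rightarrow> 'a \<Rightarrow> real"
    and L l :: nat
    and \<nu> \<nu>0 :: "('a \<times> 'a) measure"
    and Y :: "'a \<times> 'a \<Rightarrow> real"
    and N nb :: nat
  assumes prior: "prob_space mu" "sets mu = sets borel"
    and post_dens: "\<And>j. j \<le> L \<Longrightarrow> pi j \<in> borel_measurable borel \<and> (\<forall>x. 0 \<le> pi j x)
                        \<and> integrable mu (pi j) \<and> (\<integral>x. pi j x \<partial>mu) = 1"
    and prop_dens: "\<And>k. k \<in> {1..L} \<Longrightarrow> Q k \<in> borel_measurable borel \<and> (\<forall>x. 0 \<le> Q k x)
                        \<and> integrable mu (Q k) \<and> (\<integral>x. Q k x \<partial>mu) = 1"
    and A11: "\<And>k. k \<in> {1..L} \<Longrightarrow> continuous_on UNIV (Q k) \<and> (\<forall>x. 0 < Q k x)"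
    and A12: "\<And>j. j \<le> L \<Longrightarrow> continuous_on UNIV (pi j) \<and> (\<forall>x. 0 < pi j x)"
    and A13: "\<And>k j c. k \<in> {1..L} \<Longrightarrow> j \<in> {k - 1, k} \<Longrightarrow> 0 < c \<Longrightarrow>
                 compact {\<theta>. Q k \<theta> / pi j \<theta> \<le> c}"
    and A14: "\<exists>c. 0 < c \<and> c < 1 \<and> (\<forall>k \<in> {1..L}. \<forall>j \<in> {k - 1, k}.
                 AE z in mu. c \<le> Q k z / pi j z)"
    and A15: "\<exists>r > 1. \<exists>Cr. \<forall>k \<in> {1..L}.
                 integrable mu (\<lambda>z. Q k z powr r) \<and> (\<integral>z. Q k z powr r \<partial>mu) \<le> Cr"
    and lev: "l \<in> {1..L}"
    and inv: "invariant_prob borel (coupled_kernel mu (Q l) (pi (l - 1)) (pi l)) \<nu>"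
    and Y_L2: "Y \<in> borel_measurable borel" "integrable \<nu> (\<lambda>x. (Y x)\<^sup>2)"
    and init: "prob_space \<nu>0" "sets \<nu>0 = sets borel" "absolutely_continuous \<nu> \<nu>0"
              "esssup \<nu> (\<lambda>x. ereal \<bar>enn2real (RN_deriv \<nu> \<nu>0 x)\<bar>) < \<infinity>"
    and N: "1 \<le> N"
  shows "(let K = coupled_kernel mu (Q l) (pi (l - 1)) (pi l);
              g = (\<lambda>\<theta>. Y \<theta> - (\<integral>x. Y x \<partial>\<nu>));
              MSE = (\<integral>\<omega>. (1 / real N * (\<Sum>n = 1..N. g (\<omega> (n + nb))))\<^sup>2
                        \<partial>(chain_path borel \<nu>0 K (N + nb)));
              V = (\<integral>x. (Y x - (\<integral>y. Y y \<partial>\<nu>))\<^sup>2 \<partial>\<nu>);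
              \<gamma> = pseudo_gap \<nu> K;
              Cinv = 1 + 4 / ereal \<gamma>;
              Cns = 2 * esssup \<nu> (\<lambda>x. ereal \<bar>enn2real (RN_deriv \<nu> \<nu>0 x) - 1\<bar>) * (1 + 4 / ereal \<gamma>)
          in ereal MSE \<le> (Cinv + Cns) * ereal V / ereal (real N))"
proof -
  have "l - 1 \<le> L" "l \<le> L"
    using lev by auto
  then interpret coupled_densities mu "Q l" "pi (l - 1)" "pi l"
    using prior prop_dens[OF lev] post_dens[of "l - 1"] post_dens[of l]
    by (intro coupled_densities.intro prob_space_imp_sigma_finite) simp_all
  interpret stationary_markov_kernel "coupled_kernel mu (Q l) (pi (l - 1)) (pi l)" \<nu>
    using inv by unfold_locales
  define g where "g = (\<lambda>\<theta>. Y \<theta> - (\<integral>x. Y x \<partial>\<nu>))"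
  have g: "g \<in> L2_0 \<nu>"
    unfolding g_def using Y_L2 prob_space_stationary
    by (intro prob_space.centered_in_L2_0) (simp_all add: measurable_stationary_iff)
  have "sigma_finite_measure \<nu>0" "sets \<nu>0 = sets \<nu>"
    using init(1,2) by (simp_all add: prob_space_imp_sigma_finite sets_stationary)
  then obtain e where e: "0 \<le> e" "esssup \<nu> (\<lambda>x. ereal \<bar>enn2real (RN_deriv \<nu> \<nu>0 x) - 1\<bar>) = ereal e"
    and initial_le: "\<And>G. G \<in> borel_measurable \<nu> \<Longrightarrow> (\<integral>\<^sup>+x. G x \<partial>\<nu>0) \<le> ennreal (1 + e) * (\<integral>\<^sup>+x. G x \<partial>\<nu>)"
    by (rule prob_space.nn_integral_le_of_bounded_RN_deriv[OF prob_space_stationary _ _ init(3,4)]) blast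
  have "(\<integral>\<omega>. (ergodic_average N nb g \<omega>)\<^sup>2 \<partial>chain_path borel \<nu>0 K (N + nb))
      \<le> (1 + e) * (\<integral>\<omega>. (ergodic_average N nb g \<omega>)\<^sup>2 \<partial>stationary_path (N + nb))"
    using e(1) init(1,2) initial_le by (intro mse_le_stationary_mse[OF g]) (simp_all add: measurable_stationary_iff)
  then have "ereal (\<integral>\<omega>. (ergodic_average N nb g \<omega>)\<^sup>2 \<partial>chain_path borel \<nu>0 K (N + nb))
      \<le> (1 + 4 / ereal (pseudo_gap \<nu> K) + 2 * ereal e * (1 + 4 / ereal (pseudo_gap \<nu> K)))
        * ereal (\<integral>x. (g x)\<^sup>2 \<partial>\<nu>) / ereal (real N)"
    using N e(1) pseudo_gap_nonneg stationary_mse_le_variance[OF g] pseudo_gap_stationary_mse_le[OF g]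
    by (intro ereal_mse_constant_bound) simp_all
  then show ?thesis
    by (simp add: Let_def g_def e(2) ergodic_average_def)
qed

end
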